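(* $V$ is a nuclear space.
   Context: Let $N\ge2$, $\mathbf A$ an $N\times N$ zero-one aperiodic matrix, $\Sigma_{\mathbf A}^+=\{\omega\in\{1,\dots,N\}^{\mathbb N\cup\{0\}}:\mathbf A(\omega_m\omega_{m+1})=1\ \forall m\}$. $\mathrm{var}_m(\phi)=\sup\{|\phi(\omega)-\phi(\omega')|:\omega_k=\omega'_k,\ 0\le k\le m-1\}$; $V=\{\phi:\Sigma_{\mathbf A}^+\to\mathbb C:\mathrm{var}_m(\phi)^{1/m}\to0\}$ with the locally convex topology generated by the norms $\|\phi\|_\theta=\|\phi\|_\infty+[\phi]_\theta$, $\theta\in(0,1)$, $[\phi]_\theta$ the Lipschitz constant w.r.t. $d_\theta(\omega,\omega')=\theta^{\min\{m:\omega_m\ne\omega'_m\}}$. A bounded operator $T:E\to F$ between Banach spaces is nuclear if $Tx=\sum_n\lambda_n\langle x,x_n'\rangle y_n$ with $(\lambda_n)$ summable, $(x'_n)\subset E'$ and $(y_n)\subset F$ bounded. A locally convex Hausdorff space $X$ is nuclear if for every continuous seminorm $p$ there is a continuous seminorm $q\ge p$ such that the natural map $\widehat X_q\to\widehat X_p$ is nuclear, where $\widehat X_p$ is the completion of $X/\ker p$ w.r.t. $p$. *)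

theory Defs
  imports Complex_Main "HOL-Library.Extended_Real"
begin

fun matpow :: "nat \<Rightarrow> (nat \<Rightarrow> nat \<Rightarrow> nat) \<Rightarrow> nat \<Rightarrow> nat \<Rightarrow> nat \<Rightarrow> nat" where
  "matpow N A 0 i j = (if i = j then 1 else 0)"
| "matpow N A (Suc n) i j = (\<Sum>k\<in>{1..N}. matpow N A n i k * A k j)"

definition aperiodic01 :: "nat \<Rightarrow> (nat \<Rightarrow> nat \<Rightarrow> nat) \<Rightarrow> bool" where
  "aperiodic01 N A \<longleftrightarrow>
     (\<forall>i\<in>{1..N}. \<forall>j\<in>{1..N}. A i j \<in> {0, 1}) \<and>
     (\<exists>M>0. \<forall>i\<in>{1..N}. \<forall>j\<in>{1..N}. matpow N A M i j > 0)"

definition SigmaA :: "nat \<Rightarrow> (nat \<Rightarrow> nat \<Rightarrow> nat) \<Rightarrow> (nat \<Rightarrow> nat) set" where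
  "SigmaA N A = {\<omega>. (\<forall>m. \<omega> m \<in> {1..N}) \<and> (\<forall>m. A (\<omega> m) (\<omega> (Suc m)) = 1)}"

(* var_m(phi), as an extended real (a priori it may be infinite) *)
definition var :: "nat \<Rightarrow> (nat \<Rightarrow> nat \<Rightarrow> nat) \<Rightarrow> ((nat \<Rightarrow> nat) \<Rightarrow> complex) \<Rightarrow> nat \<Rightarrow> ereal" where
  "var N A \<phi> m = (SUP p \<in> {(\<omega>, \<omega>'). \<omega> \<in> SigmaA N A \<and> \<omega>' \<in> SigmaA N A \<and> (\<forall>k<m. \<omega> k = \<omega>' k)}.
                     ereal (cmod (\<phi> (fst p) - \<phi> (snd p))))"

(* Functions are functions on Sigma_A^+; we represent them as functions on
   all sequences which vanish outside Sigma_A^+.  The condition var_m(phi)^(1/m) \<rightarrow> 0 is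
   written out: for every eps > 0, eventually var_m(phi) \<le> eps^m. *)
definition Vspace :: "nat \<Rightarrow> (nat \<Rightarrow> nat \<Rightarrow> nat) \<Rightarrow> ((nat \<Rightarrow> nat) \<Rightarrow> complex) set" where
  "Vspace N A = {\<phi>. (\<forall>\<omega>. \<omega> \<notin> SigmaA N A \<longrightarrow> \<phi> \<omega> = 0) \<and>
                    (\<forall>\<epsilon>::real>0. \<forall>\<^sub>F m in sequentially. var N A \<phi> m \<le> ereal (\<epsilon> ^ m))}"

definition supnorm :: "nat \<Rightarrow> (nat \<Rightarrow> nat \<Rightarrow> nat) \<Rightarrow> ((nat \<Rightarrow> nat) \<Rightarrow> complex) \<Rightarrow> real" where
  "supnorm N A \<phi> = Sup (insert 0 ((\<lambda>\<omega>. cmod (\<phi> \<omega>)) ` SigmaA N A))"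

(* Lipschitz constant w.r.t. d_theta(w,w') = theta ^ (min {m. w m \<noteq> w' m}) *)
definition lipconst :: "nat \<Rightarrow> (nat \<Rightarrow> nat \<Rightarrow> nat) \<Rightarrow> real \<Rightarrow> ((nat \<Rightarrow> nat) \<Rightarrow> complex) \<Rightarrow> real" where
  "lipconst N A \<theta> \<phi> = Sup (insert 0
     {cmod (\<phi> \<omega> - \<phi> \<omega>') / \<theta> ^ (LEAST m. \<omega> m \<noteq> \<omega>' m) | \<omega> \<omega>'.
        \<omega> \<in> SigmaA N A \<and> \<omega>' \<in> SigmaA N A \<and> \<omega> \<noteq> \<omega>'})"

definition thetanorm :: "nat \<Rightarrow> (nat \<Rightarrow> nat \<Rightarrow> nat) \<Rightarrow> real \<Rightarrow> ((nat \<Rightarrow> nat) \<Rightarrow> complex) \<Rightarrow> real" where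
  "thetanorm N A \<theta> \<phi> = supnorm N A \<phi> + lipconst N A \<theta> \<phi>"

definition seminorm_V :: "nat \<Rightarrow> (nat \<Rightarrow> nat \<Rightarrow> nat) \<Rightarrow> (((nat \<Rightarrow> nat) \<Rightarrow> complex) \<Rightarrow> real) \<Rightarrow> bool" where
  "seminorm_V N A p \<longleftrightarrow>
     (\<forall>\<phi>\<in>Vspace N A. \<forall>\<psi>\<in>Vspace N A. p (\<lambda>\<omega>. \<phi> \<omega> + \<psi> \<omega>) \<le> p \<phi> + p \<psi>) \<and>
     (\<forall>\<phi>\<in>Vspace N A. \<forall>c::complex. p (\<lambda>\<omega>. c * \<phi> \<omega>) = cmod c * p \<phi>)"

(* continuous seminorm for the locally convex topology generated by the norms ||.||_theta:
   dominated by a constant times a finite sum of generating norms *)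
definition cont_seminorm_V :: "nat \<Rightarrow> (nat \<Rightarrow> nat \<Rightarrow> nat) \<Rightarrow> (((nat \<Rightarrow> nat) \<Rightarrow> complex) \<Rightarrow> real) \<Rightarrow> bool" where
  "cont_seminorm_V N A p \<longleftrightarrow> seminorm_V N A p \<and>
     (\<exists>F C. finite F \<and> F \<subseteq> {0<..<1} \<and>
        (\<forall>\<phi>\<in>Vspace N A. p \<phi> \<le> C * (\<Sum>\<theta>\<in>F. thetanorm N A \<theta> \<phi>)))"

(* Completion of (V, p): p-Cauchy sequences in V, with the limit seminorm *)
definition pCauchy :: "nat \<Rightarrow> (nat \<Rightarrow> nat \<Rightarrow> nat) \<Rightarrow> (((nat \<Rightarrow> nat) \<Rightarrow> complex) \<Rightarrow> real)
     \<Rightarrow> (nat \<Rightarrow> (nat \<Rightarrow> nat) \<Rightarrow> complex) \<Rightarrow> bool" where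
  "pCauchy N A p s \<longleftrightarrow> (\<forall>k. s k \<in> Vspace N A) \<and>
     (\<forall>\<epsilon>>0. \<exists>K. \<forall>k\<ge>K. \<forall>l\<ge>K. p (\<lambda>\<omega>. s k \<omega> - s l \<omega>) < \<epsilon>)"

definition cnorm :: "(((nat \<Rightarrow> nat) \<Rightarrow> complex) \<Rightarrow> real) \<Rightarrow> (nat \<Rightarrow> (nat \<Rightarrow> nat) \<Rightarrow> complex) \<Rightarrow> real" where
  "cnorm p s = lim (\<lambda>k. p (s k))"

definition cdist :: "(((nat \<Rightarrow> nat) \<Rightarrow> complex) \<Rightarrow> real) \<Rightarrow> (nat \<Rightarrow> (nat \<Rightarrow> nat) \<Rightarrow> complex)
     \<Rightarrow> (nat \<Rightarrow> (nat \<Rightarrow> nat) \<Rightarrow> complex) \<Rightarrow> real" where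
  "cdist p s t = lim (\<lambda>k. p (\<lambda>\<omega>. s k \<omega> - t k \<omega>))"

(* The natural map from the completion w.r.t. q to the completion w.r.t. p is nuclear:
   iota(x) = sum_n lambda_n <x, x'_n> y_n  with (lambda_n) summable, (x'_n) a bounded
   sequence in the dual of the q-completion, (y_n) a bounded sequence in the p-completion. *)
definition nuclear_natmap :: "nat \<Rightarrow> (nat \<Rightarrow> nat \<Rightarrow> nat) \<Rightarrow> (((nat \<Rightarrow> nat) \<Rightarrow> complex) \<Rightarrow> real)
     \<Rightarrow> (((nat \<Rightarrow> nat) \<Rightarrow> complex) \<Rightarrow> real) \<Rightarrow> bool" where
  "nuclear_natmap N A q p \<longleftrightarrow>
     (\<exists>(lam :: nat \<Rightarrow> complex) (f :: nat \<Rightarrow> (nat \<Rightarrow> (nat \<Rightarrow> nat) \<Rightarrow> complex) \<Rightarrow> complex)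
        (y :: nat \<Rightarrow> nat \<Rightarrow> (nat \<Rightarrow> nat) \<Rightarrow> complex).
        summable (\<lambda>n. cmod (lam n)) \<and>
        (\<forall>n s t. pCauchy N A q s \<longrightarrow> pCauchy N A q t \<longrightarrow>
            f n (\<lambda>k \<omega>. s k \<omega> + t k \<omega>) = f n s + f n t) \<and>
        (\<forall>n s c. pCauchy N A q s \<longrightarrow> f n (\<lambda>k \<omega>. c * s k \<omega>) = c * f n s) \<and>
        (\<exists>C. \<forall>n s. pCauchy N A q s \<longrightarrow> cmod (f n s) \<le> C * cnorm q s) \<and>
        (\<forall>n. pCauchy N A p (y n)) \<and>
        (\<exists>C. \<forall>n. cnorm p (y n) \<le> C) \<and>
        (\<forall>s. pCauchy N A q s \<longrightarrow>
            (\<lambda>M. cdist p s (\<lambda>k \<omega>. \<Sum>n<M. lam n * f n s * y n k \<omega>)) \<longlonglongrightarrow> 0))"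

(* V is a nuclear (locally convex Hausdorff) space *)
definition nuclear_V :: "nat \<Rightarrow> (nat \<Rightarrow> nat \<Rightarrow> nat) \<Rightarrow> bool" where
  "nuclear_V N A \<longleftrightarrow>
     (\<forall>\<phi>\<in>Vspace N A. (\<exists>\<omega>. \<phi> \<omega> \<noteq> 0) \<longrightarrow> (\<exists>\<theta>\<in>{0<..<1}. thetanorm N A \<theta> \<phi> > 0)) \<and>
     (\<forall>p. cont_seminorm_V N A p \<longrightarrow>
        (\<exists>q. cont_seminorm_V N A q \<and> (\<forall>\<phi>\<in>Vspace N A. p \<phi> \<le> q \<phi>) \<and> nuclear_natmap N A q p))"

end

theory Submission
  imports Defs "HOL-Library.Nat_Bijection"
begin

(* A function in V is d_theta-Lipschitz for every theta.  Sampling phi at one point of every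
   cylinder [w] and telescoping along prefixes writes phi as the sum over all words w of
   c_w(phi) 1_[w], where c_w(phi) is the increment of phi between the sample points of [w] and of
   its parent cylinder.  Hence |c_w(phi)| <= [phi]_theta1 theta1^(|w|-1), while
   ||1_[w]||_theta0 <= 2 theta0^(-|w|).  With theta1 = theta0/(2N) and rho = 1/(2N) the expansion
     phi = sum_w rho^|w| (c_w(phi) / theta1^|w|) (theta0^|w| 1_[w])
   is a nuclear representation of the natural map between the completions for ||.||_theta1 and
   ||.||_theta0: the functionals are ||.||_theta1-bounded, the vectors ||.||_theta0-bounded, and the
   weights sum to at most sum_L N^L rho^L = 2.  Every continuous seminorm is dominated by a multiple
   of a single ||.||_theta0, which is dominated by ||.||_theta1 for theta1 < theta0. *)

section \<open>Cylinders\<close>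

definition agree :: "nat \<Rightarrow> (nat \<Rightarrow> nat) \<Rightarrow> (nat \<Rightarrow> nat) \<Rightarrow> bool" where
  "agree j x y \<longleftrightarrow> (\<forall>k<j. x k = y k)"

definition in_cylinder :: "nat list \<Rightarrow> (nat \<Rightarrow> nat) \<Rightarrow> bool" where
  "in_cylinder w x \<longleftrightarrow> map x [0..<length w] = w"

lemma agree_mono: "agree j x y \<Longrightarrow> i \<le> j \<Longrightarrow> agree i x y"
  unfolding agree_def by auto

lemma agree_prefix_eq: "agree L x y \<Longrightarrow> map x [0..<L] = map y [0..<L]"
  unfolding agree_def by simp

lemma agree_Least: "x \<noteq> y \<Longrightarrow> agree (LEAST m. x m \<noteq> y m) x y"
  unfolding agree_def using not_less_Least by blast

lemma Least_ge_agree: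
  assumes "agree j x y" "x \<noteq> y"
  shows "j \<le> (LEAST m. x m \<noteq> y m)"
proof -
  from assms(2) obtain m where "x m \<noteq> y m" by auto
  then have "x (LEAST m. x m \<noteq> y m) \<noteq> y (LEAST m. x m \<noteq> y m)" by (rule LeastI)
  then show ?thesis using assms(1) unfolding agree_def by (meson not_le)
qed

lemma in_cylinder_prefix: "in_cylinder (map x [0..<L]) x"
  unfolding in_cylinder_def by simp

lemma in_cylinder_agree: "in_cylinder w x \<Longrightarrow> in_cylinder w y \<Longrightarrow> agree (length w) x y"
  unfolding in_cylinder_def agree_def by (metis add_0 diff_zero length_map length_upt nth_map_upt)

lemma in_cylinder_cong: "agree (length w) x y \<Longrightarrow> in_cylinder w x \<longleftrightarrow> in_cylinder w y"
  unfolding in_cylinder_def by (metis agree_prefix_eq)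

lemma in_cylinder_butlast: "in_cylinder w x \<Longrightarrow> in_cylinder (butlast w) x"
proof -
  assume w: "in_cylinder w x"
  have "butlast [0..<n] = [0..<n - 1]" for n by (cases n) auto
  moreover have "butlast w = map x (butlast [0..<length w])"
    using w unfolding in_cylinder_def by (metis map_butlast)
  ultimately show ?thesis unfolding in_cylinder_def by simp
qed

locale subshift =
  fixes N :: nat and A :: "nat \<Rightarrow> nat \<Rightarrow> nat"
begin

definition words :: "nat \<Rightarrow> nat list set" where
  "words L = {w. set w \<subseteq> {1..N} \<and> length w = L}"

definition words_upto :: "nat \<Rightarrow> nat list set" where
  "words_upto L = {w. set w \<subseteq> {1..N} \<and> length w \<le> L}"

lemma finite_words: "finite (words L)"
  unfolding words_def by (rule finite_lists_length_eq) simp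

lemma card_words: "card (words L) = N ^ L"
  unfolding words_def using card_lists_length_eq[of "{1..N}" L] by simp

lemma finite_words_upto: "finite (words_upto L)"
  unfolding words_upto_def by (rule finite_lists_length_le) simp

lemma words_upto_0: "words_upto 0 = {[]}"
  unfolding words_upto_def by auto

lemma words_upto_Suc: "words_upto (Suc L) = words_upto L \<union> words (Suc L)"
  unfolding words_upto_def words_def by auto

lemma words_upto_disjoint_words: "words_upto L \<inter> words (Suc L) = {}"
  unfolding words_upto_def words_def by auto

lemma prefix_in_words: "\<omega> \<in> SigmaA N A \<Longrightarrow> map \<omega> [0..<L] \<in> words L"
  unfolding words_def SigmaA_def by auto

definition cyl_point :: "nat list \<Rightarrow> nat \<Rightarrow> nat" where
  "cyl_point w = (SOME x. x \<in> SigmaA N A \<and> in_cylinder w x)"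

lemma cyl_point:
  assumes "x \<in> SigmaA N A" "in_cylinder w x"
  shows "cyl_point w \<in> SigmaA N A" "in_cylinder w (cyl_point w)"
  using someI[of "\<lambda>x. x \<in> SigmaA N A \<and> in_cylinder w x", OF conjI[OF assms]]
  unfolding cyl_point_def by auto

lemma cyl_point_prefix:
  assumes "\<omega> \<in> SigmaA N A"
  shows "cyl_point (map \<omega> [0..<L]) \<in> SigmaA N A" "agree L \<omega> (cyl_point (map \<omega> [0..<L]))"
  using cyl_point[OF assms in_cylinder_prefix] in_cylinder_agree[OF in_cylinder_prefix] by auto

lemma bounded_if_close_on_cylinders:
  assumes "\<And>\<omega> \<omega>'. \<omega> \<in> SigmaA N A \<Longrightarrow> \<omega>' \<in> SigmaA N A \<Longrightarrow> agree m \<omega> \<omega>' \<Longrightarrow>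
             cmod (\<phi> \<omega> - \<phi> \<omega>') \<le> d"
  shows "\<exists>B. \<forall>\<omega>\<in>SigmaA N A. cmod (\<phi> \<omega>) \<le> B"
proof (intro exI ballI)
  fix \<omega> assume \<omega>: "\<omega> \<in> SigmaA N A"
  define x where "x = cyl_point (map \<omega> [0..<m])"
  have "cmod (\<phi> \<omega>) \<le> cmod (\<phi> x) + cmod (\<phi> \<omega> - \<phi> x)"
    by (metis add.commute norm_triangle_sub)
  also have "\<dots> \<le> cmod (\<phi> x) + d"
    using assms[OF \<omega> cyl_point_prefix[OF \<omega>]] unfolding x_def by simp
  also have "cmod (\<phi> x) \<le> (\<Sum>w\<in>words m. cmod (\<phi> (cyl_point w)))"
    unfolding x_def by (rule member_le_sum[OF prefix_in_words[OF \<omega>]]) (auto simp: finite_words)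
  finally show "cmod (\<phi> \<omega>) \<le> (\<Sum>w\<in>words m. cmod (\<phi> (cyl_point w))) + d" by simp
qed

section \<open>The space V as a space of Lipschitz functions\<close>

definition lipschitz_theta :: "real \<Rightarrow> real \<Rightarrow> ((nat \<Rightarrow> nat) \<Rightarrow> complex) \<Rightarrow> bool" where
  "lipschitz_theta \<theta> L \<phi> \<longleftrightarrow> (\<forall>\<omega>\<in>SigmaA N A. \<forall>\<omega>'\<in>SigmaA N A. \<forall>j.
      agree j \<omega> \<omega>' \<longrightarrow> cmod (\<phi> \<omega> - \<phi> \<omega>') \<le> L * \<theta> ^ j)"

definition lipschitz_all :: "((nat \<Rightarrow> nat) \<Rightarrow> complex) \<Rightarrow> bool" where
  "lipschitz_all \<phi> \<longleftrightarrow> (\<forall>\<theta>\<in>{0<..<1}. \<exists>L. lipschitz_theta \<theta> L \<phi>)"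

lemma lipschitz_thetaI:
  "(\<And>\<omega> \<omega>' j. \<omega> \<in> SigmaA N A \<Longrightarrow> \<omega>' \<in> SigmaA N A \<Longrightarrow> agree j \<omega> \<omega>' \<Longrightarrow>
      cmod (\<phi> \<omega> - \<phi> \<omega>') \<le> L * \<theta> ^ j) \<Longrightarrow> lipschitz_theta \<theta> L \<phi>"
  unfolding lipschitz_theta_def by blast

lemma lipschitz_thetaD:
  "lipschitz_theta \<theta> L \<phi> \<Longrightarrow> \<omega> \<in> SigmaA N A \<Longrightarrow> \<omega>' \<in> SigmaA N A \<Longrightarrow> agree j \<omega> \<omega>' \<Longrightarrow>
      cmod (\<phi> \<omega> - \<phi> \<omega>') \<le> L * \<theta> ^ j"
  unfolding lipschitz_theta_def by blast

lemma lipschitz_theta_mono: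
  assumes "lipschitz_theta \<theta> L \<phi>" "L \<le> L'" "0 \<le> \<theta>"
  shows "lipschitz_theta \<theta> L' \<phi>"
proof (rule lipschitz_thetaI)
  fix \<omega> \<omega>' j assume "\<omega> \<in> SigmaA N A" "\<omega>' \<in> SigmaA N A" "agree j \<omega> \<omega>'"
  then have "cmod (\<phi> \<omega> - \<phi> \<omega>') \<le> L * \<theta> ^ j" by (rule lipschitz_thetaD[OF assms(1)])
  also have "\<dots> \<le> L' * \<theta> ^ j" using assms(2,3) by (simp add: mult_right_mono)
  finally show "cmod (\<phi> \<omega> - \<phi> \<omega>') \<le> L' * \<theta> ^ j" .
qed

lemma lipschitz_theta_add:
  assumes "lipschitz_theta \<theta> L \<phi>" "lipschitz_theta \<theta> L' \<psi>"
  shows "lipschitz_theta \<theta> (L + L') (\<lambda>\<omega>. \<phi> \<omega> + \<psi> \<omega>)"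
proof (rule lipschitz_thetaI)
  fix \<omega> \<omega>' j assume o: "\<omega> \<in> SigmaA N A" "\<omega>' \<in> SigmaA N A" "agree j \<omega> \<omega>'"
  have "cmod (\<phi> \<omega> + \<psi> \<omega> - (\<phi> \<omega>' + \<psi> \<omega>')) \<le> cmod (\<phi> \<omega> - \<phi> \<omega>') + cmod (\<psi> \<omega> - \<psi> \<omega>')"
    by (metis add_diff_add norm_triangle_ineq)
  also have "\<dots> \<le> L * \<theta> ^ j + L' * \<theta> ^ j"
    using lipschitz_thetaD[OF assms(1) o] lipschitz_thetaD[OF assms(2) o] by simp
  finally show "cmod (\<phi> \<omega> + \<psi> \<omega> - (\<phi> \<omega>' + \<psi> \<omega>')) \<le> (L + L') * \<theta> ^ j"
    by (simp add: distrib_right)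
qed

lemma lipschitz_theta_scale:
  assumes "lipschitz_theta \<theta> L \<phi>"
  shows "lipschitz_theta \<theta> (cmod c * L) (\<lambda>\<omega>. c * \<phi> \<omega>)"
proof (rule lipschitz_thetaI)
  fix \<omega> \<omega>' j assume o: "\<omega> \<in> SigmaA N A" "\<omega>' \<in> SigmaA N A" "agree j \<omega> \<omega>'"
  have "cmod (c * \<phi> \<omega> - c * \<phi> \<omega>') = cmod c * cmod (\<phi> \<omega> - \<phi> \<omega>')"
    by (metis norm_mult right_diff_distrib)
  also have "\<dots> \<le> cmod c * (L * \<theta> ^ j)"
    using lipschitz_thetaD[OF assms o] by (simp add: mult_left_mono)
  finally show "cmod (c * \<phi> \<omega> - c * \<phi> \<omega>') \<le> cmod c * L * \<theta> ^ j" by (simp add: mult.assoc)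
qed

lemma var_ge:
  assumes "\<omega> \<in> SigmaA N A" "\<omega>' \<in> SigmaA N A" "agree m \<omega> \<omega>'"
  shows "ereal (cmod (\<phi> \<omega> - \<phi> \<omega>')) \<le> var N A \<phi> m"
  unfolding var_def
  by (rule SUP_upper2[where i="(\<omega>, \<omega>')"]) (use assms in \<open>auto simp: agree_def\<close>)

lemma Vspace_imp_lipschitz_all:
  assumes "\<phi> \<in> Vspace N A"
  shows "lipschitz_all \<phi>"
  unfolding lipschitz_all_def
proof
  fix \<theta> :: real assume \<theta>: "\<theta> \<in> {0<..<1}"
  with assms have "\<forall>\<^sub>F m in sequentially. var N A \<phi> m \<le> ereal (\<theta> ^ m)"
    unfolding Vspace_def by auto
  then obtain m0 where m0: "\<And>m. m \<ge> m0 \<Longrightarrow> var N A \<phi> m \<le> ereal (\<theta> ^ m)"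
    unfolding eventually_sequentially by blast
  have close: "cmod (\<phi> \<omega> - \<phi> \<omega>') \<le> \<theta> ^ m"
    if "\<omega> \<in> SigmaA N A" "\<omega>' \<in> SigmaA N A" "agree m \<omega> \<omega>'" "m \<ge> m0" for \<omega> \<omega>' m
    using order_trans[OF var_ge[OF that(1-3)] m0[OF that(4)]] by simp
  have "\<theta> ^ m0 \<le> 1" using \<theta> by (simp add: power_le_one)
  then have "cmod (\<phi> \<omega> - \<phi> \<omega>') \<le> 1"
    if "\<omega> \<in> SigmaA N A" "\<omega>' \<in> SigmaA N A" "agree m0 \<omega> \<omega>'" for \<omega> \<omega>'
    using close[OF that order_refl] by linarith
  then obtain B where B: "\<forall>\<omega>\<in>SigmaA N A. cmod (\<phi> \<omega>) \<le> B"
    using bounded_if_close_on_cylinders by blast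
  define L where "L = max 1 (2 * B / \<theta> ^ m0)"
  have "lipschitz_theta \<theta> L \<phi>"
  proof (rule lipschitz_thetaI)
    fix \<omega> \<omega>' j assume o: "\<omega> \<in> SigmaA N A" "\<omega>' \<in> SigmaA N A" "agree j \<omega> \<omega>'"
    show "cmod (\<phi> \<omega> - \<phi> \<omega>') \<le> L * \<theta> ^ j"
    proof (cases "m0 \<le> j")
      case True
      then have "cmod (\<phi> \<omega> - \<phi> \<omega>') \<le> \<theta> ^ j" by (rule close[OF o])
      also have "\<dots> \<le> L * \<theta> ^ j" using \<theta> by (simp add: L_def mult_le_cancel_right1)
      finally show ?thesis .
    next
      case False
      have B0: "0 \<le> B" using B o(1) norm_ge_zero order_trans by blast
      have "cmod (\<phi> \<omega> - \<phi> \<omega>') \<le> cmod (\<phi> \<omega>) + cmod (\<phi> \<omega>')" by (rule norm_triangle_ineq4)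
      also have "\<dots> \<le> 2 * B" using add_mono[OF bspec[OF B o(1)] bspec[OF B o(2)]] by simp
      also have "\<dots> = (2 * B / \<theta> ^ m0) * \<theta> ^ m0" using \<theta> by simp
      also have "\<dots> \<le> (2 * B / \<theta> ^ m0) * \<theta> ^ j"
        using \<theta> False B0 by (intro mult_left_mono power_decreasing) auto
      also have "\<dots> \<le> L * \<theta> ^ j" unfolding L_def using \<theta> by (intro mult_right_mono) auto
      finally show ?thesis .
    qed
  qed
  then show "\<exists>L. lipschitz_theta \<theta> L \<phi>" ..
qed

lemma lipschitz_all_imp_Vspace:
  assumes vanish: "\<And>\<omega>. \<omega> \<notin> SigmaA N A \<Longrightarrow> \<phi> \<omega> = 0" and lip: "lipschitz_all \<phi>"
  shows "\<phi> \<in> Vspace N A"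
  unfolding Vspace_def
proof (intro CollectI conjI allI impI)
  fix \<omega> assume "\<omega> \<notin> SigmaA N A" then show "\<phi> \<omega> = 0" by (rule vanish)
next
  fix \<epsilon> :: real assume "\<epsilon> > 0"
  define e where "e = min \<epsilon> (1/2)"
  have e: "0 < e" "e < 1" "e \<le> \<epsilon>" using \<open>\<epsilon> > 0\<close> unfolding e_def by auto
  have "e / 2 \<in> {0<..<1}" using e by simp
  then obtain L where L: "lipschitz_theta (e / 2) L \<phi>"
    using lip unfolding lipschitz_all_def by blast
  obtain m0 where m0: "L \<le> 2 ^ m0"
    using real_arch_pow[of 2 L] by (auto intro: less_imp_le)
  show "\<forall>\<^sub>F m in sequentially. var N A \<phi> m \<le> ereal (\<epsilon> ^ m)"
    unfolding eventually_sequentially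
  proof (intro exI allI impI)
    fix m assume "m \<ge> m0"
    then have "L \<le> 2 ^ m" using m0 power_increasing[of m0 m "2::real"] by linarith
    then have "L * (e / 2) ^ m \<le> 2 ^ m * (e / 2) ^ m" using e by (intro mult_right_mono) auto
    also have "\<dots> = e ^ m" by (simp add: power_divide)
    also have "\<dots> \<le> \<epsilon> ^ m" using e by (intro power_mono) auto
    finally have le: "L * (e / 2) ^ m \<le> \<epsilon> ^ m" .
    show "var N A \<phi> m \<le> ereal (\<epsilon> ^ m)"
      unfolding var_def
    proof (rule SUP_least, clarify)
      fix \<omega> \<omega>' assume "\<omega> \<in> SigmaA N A" "\<omega>' \<in> SigmaA N A" "\<forall>k<m. \<omega> k = \<omega>' k"
      then have "cmod (\<phi> \<omega> - \<phi> \<omega>') \<le> L * (e / 2) ^ m"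
        using lipschitz_thetaD[OF L] by (simp add: agree_def)
      then show "ereal (cmod (\<phi> (fst (\<omega>, \<omega>')) - \<phi> (snd (\<omega>, \<omega>')))) \<le> ereal (\<epsilon> ^ m)"
        using le by simp
    qed
  qed
qed

lemma Vspace_iff:
  "\<phi> \<in> Vspace N A \<longleftrightarrow> (\<forall>\<omega>. \<omega> \<notin> SigmaA N A \<longrightarrow> \<phi> \<omega> = 0) \<and> lipschitz_all \<phi>"
  using Vspace_imp_lipschitz_all lipschitz_all_imp_Vspace unfolding Vspace_def by blast

lemma lipschitz_all_add:
  assumes "lipschitz_all \<phi>" "lipschitz_all \<psi>"
  shows "lipschitz_all (\<lambda>\<omega>. \<phi> \<omega> + \<psi> \<omega>)"
  unfolding lipschitz_all_def
proof
  fix \<theta> :: real assume "\<theta> \<in> {0<..<1}"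
  with assms obtain L L' where "lipschitz_theta \<theta> L \<phi>" "lipschitz_theta \<theta> L' \<psi>"
    unfolding lipschitz_all_def by blast
  then show "\<exists>L. lipschitz_theta \<theta> L (\<lambda>\<omega>. \<phi> \<omega> + \<psi> \<omega>)" by (blast intro: lipschitz_theta_add)
qed

lemma lipschitz_all_scale: "lipschitz_all \<phi> \<Longrightarrow> lipschitz_all (\<lambda>\<omega>. c * \<phi> \<omega>)"
  unfolding lipschitz_all_def by (metis lipschitz_theta_scale)

lemma Vspace_add: "\<phi> \<in> Vspace N A \<Longrightarrow> \<psi> \<in> Vspace N A \<Longrightarrow> (\<lambda>\<omega>. \<phi> \<omega> + \<psi> \<omega>) \<in> Vspace N A"
  unfolding Vspace_iff using lipschitz_all_add by simp

lemma Vspace_scale: "\<phi> \<in> Vspace N A \<Longrightarrow> (\<lambda>\<omega>. c * \<phi> \<omega>) \<in> Vspace N A"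
  unfolding Vspace_iff using lipschitz_all_scale by simp

lemma Vspace_diff: "\<phi> \<in> Vspace N A \<Longrightarrow> \<psi> \<in> Vspace N A \<Longrightarrow> (\<lambda>\<omega>. \<phi> \<omega> - \<psi> \<omega>) \<in> Vspace N A"
  using Vspace_add[OF _ Vspace_scale[of \<psi> "-1"]] by simp

lemma Vspace_zero: "(\<lambda>\<omega>. 0) \<in> Vspace N A"
  unfolding Vspace_iff lipschitz_all_def lipschitz_theta_def by (auto intro!: exI[of _ 0])

lemma Vspace_sum:
  "finite I \<Longrightarrow> (\<And>i. i \<in> I \<Longrightarrow> g i \<in> Vspace N A) \<Longrightarrow> (\<lambda>\<omega>. \<Sum>i\<in>I. g i \<omega>) \<in> Vspace N A"
  by (induction I rule: finite_induct) (auto intro: Vspace_zero Vspace_add)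

section \<open>The norms ||.||_theta\<close>

lemma lipschitz_all_bounded:
  assumes "lipschitz_all \<phi>"
  shows "\<exists>B. \<forall>\<omega>\<in>SigmaA N A. cmod (\<phi> \<omega>) \<le> B"
proof -
  have "(1/2 :: real) \<in> {0<..<1}" by simp
  then obtain L where L: "lipschitz_theta (1/2) L \<phi>"
    using assms unfolding lipschitz_all_def by blast
  have "cmod (\<phi> \<omega> - \<phi> \<omega>') \<le> L" if "\<omega> \<in> SigmaA N A" "\<omega>' \<in> SigmaA N A" for \<omega> \<omega>'
    using lipschitz_thetaD[OF L that, of 0] by (simp add: agree_def)
  then show ?thesis by (rule bounded_if_close_on_cylinders)
qed

lemma supnorm_bdd_above:
  "lipschitz_all \<phi> \<Longrightarrow> bdd_above (insert 0 ((\<lambda>\<omega>. cmod (\<phi> \<omega>)) ` SigmaA N A))"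
  by (drule lipschitz_all_bounded) (auto intro: bdd_aboveI2[of _ _ "max 0 _"])

lemma supnorm_ge: "lipschitz_all \<phi> \<Longrightarrow> \<omega> \<in> SigmaA N A \<Longrightarrow> cmod (\<phi> \<omega>) \<le> supnorm N A \<phi>"
  unfolding supnorm_def by (rule cSup_upper[OF _ supnorm_bdd_above]) auto

lemma supnorm_nonneg: "lipschitz_all \<phi> \<Longrightarrow> 0 \<le> supnorm N A \<phi>"
  unfolding supnorm_def by (rule cSup_upper[OF _ supnorm_bdd_above]) auto

lemma supnorm_le: "0 \<le> B \<Longrightarrow> (\<And>\<omega>. \<omega> \<in> SigmaA N A \<Longrightarrow> cmod (\<phi> \<omega>) \<le> B) \<Longrightarrow> supnorm N A \<phi> \<le> B"
  unfolding supnorm_def by (rule cSup_least) auto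

lemma lipconst_quotient_le:
  assumes "lipschitz_theta \<theta> L \<phi>" "0 \<le> L" "\<theta> \<in> {0<..<1}"
    and "x \<in> insert 0 {cmod (\<phi> \<omega> - \<phi> \<omega>') / \<theta> ^ (LEAST m. \<omega> m \<noteq> \<omega>' m) | \<omega> \<omega>'.
                   \<omega> \<in> SigmaA N A \<and> \<omega>' \<in> SigmaA N A \<and> \<omega> \<noteq> \<omega>'}"
  shows "x \<le> L"
  using assms(4)
proof
  assume "x \<in> {cmod (\<phi> \<omega> - \<phi> \<omega>') / \<theta> ^ (LEAST m. \<omega> m \<noteq> \<omega>' m) | \<omega> \<omega>'.
                   \<omega> \<in> SigmaA N A \<and> \<omega>' \<in> SigmaA N A \<and> \<omega> \<noteq> \<omega>'}"
  then obtain \<omega> \<omega>' where x: "x = cmod (\<phi> \<omega> - \<phi> \<omega>') / \<theta> ^ (LEAST m. \<omega> m \<noteq> \<omega>' m)"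
    and o: "\<omega> \<in> SigmaA N A" "\<omega>' \<in> SigmaA N A" "\<omega> \<noteq> \<omega>'" by blast
  have "cmod (\<phi> \<omega> - \<phi> \<omega>') \<le> L * \<theta> ^ (LEAST m. \<omega> m \<noteq> \<omega>' m)"
    by (rule lipschitz_thetaD[OF assms(1) o(1,2) agree_Least[OF o(3)]])
  then show "x \<le> L" unfolding x using assms(3) by (simp add: divide_le_eq)
qed (use assms in simp)

lemma lipconst_le:
  assumes "lipschitz_theta \<theta> L \<phi>" "0 \<le> L" "\<theta> \<in> {0<..<1}"
  shows "lipconst N A \<theta> \<phi> \<le> L"
  unfolding lipconst_def by (rule cSup_least) (use lipconst_quotient_le[OF assms] in blast)+

lemma lipconst_bdd_above:
  assumes "lipschitz_all \<phi>" "\<theta> \<in> {0<..<1}"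
  shows "bdd_above (insert 0 {cmod (\<phi> \<omega> - \<phi> \<omega>') / \<theta> ^ (LEAST m. \<omega> m \<noteq> \<omega>' m) | \<omega> \<omega>'.
                   \<omega> \<in> SigmaA N A \<and> \<omega>' \<in> SigmaA N A \<and> \<omega> \<noteq> \<omega>'})"
proof -
  obtain L where "lipschitz_theta \<theta> L \<phi>" using assms unfolding lipschitz_all_def by blast
  then have L: "lipschitz_theta \<theta> (max 0 L) \<phi>" using assms(2) by (auto intro: lipschitz_theta_mono)
  show ?thesis
    by (intro bdd_aboveI[of _ "max 0 L"]) (rule lipconst_quotient_le[OF L _ assms(2)], simp_all)
qed

lemma lipconst_nonneg: "lipschitz_all \<phi> \<Longrightarrow> \<theta> \<in> {0<..<1} \<Longrightarrow> 0 \<le> lipconst N A \<theta> \<phi>"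
  unfolding lipconst_def by (rule cSup_upper[OF _ lipconst_bdd_above]) auto

lemma lipschitz_theta_lipconst:
  assumes "lipschitz_all \<phi>" "\<theta> \<in> {0<..<1}"
  shows "lipschitz_theta \<theta> (lipconst N A \<theta> \<phi>) \<phi>"
proof (rule lipschitz_thetaI)
  fix \<omega> \<omega>' j assume o: "\<omega> \<in> SigmaA N A" "\<omega>' \<in> SigmaA N A" "agree j \<omega> \<omega>'"
  show "cmod (\<phi> \<omega> - \<phi> \<omega>') \<le> lipconst N A \<theta> \<phi> * \<theta> ^ j"
  proof (cases "\<omega> = \<omega>'")
    case True
    then show ?thesis using lipconst_nonneg[OF assms] assms(2) by simp
  next
    case False
    define l where "l = (LEAST m. \<omega> m \<noteq> \<omega>' m)"
    have "cmod (\<phi> \<omega> - \<phi> \<omega>') / \<theta> ^ l \<le> lipconst N A \<theta> \<phi>"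
      unfolding lipconst_def l_def
      by (rule cSup_upper[OF _ lipconst_bdd_above[OF assms]]) (use o False in blast)
    then have "cmod (\<phi> \<omega> - \<phi> \<omega>') \<le> lipconst N A \<theta> \<phi> * \<theta> ^ l"
      using assms(2) by (simp add: divide_le_eq)
    also have "\<dots> \<le> lipconst N A \<theta> \<phi> * \<theta> ^ j"
      using assms(2) Least_ge_agree[OF o(3) False] lipconst_nonneg[OF assms]
      by (intro mult_left_mono power_decreasing) (auto simp: l_def)
    finally show ?thesis .
  qed
qed

lemma thetanorm_nonneg: "lipschitz_all \<phi> \<Longrightarrow> \<theta> \<in> {0<..<1} \<Longrightarrow> 0 \<le> thetanorm N A \<theta> \<phi>"
  unfolding thetanorm_def using supnorm_nonneg lipconst_nonneg by (simp add: add_nonneg_nonneg)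

lemma supnorm_le_thetanorm: "lipschitz_all \<phi> \<Longrightarrow> \<theta> \<in> {0<..<1} \<Longrightarrow> supnorm N A \<phi> \<le> thetanorm N A \<theta> \<phi>"
  unfolding thetanorm_def using lipconst_nonneg by simp

lemma lipconst_le_thetanorm: "lipschitz_all \<phi> \<Longrightarrow> lipconst N A \<theta> \<phi> \<le> thetanorm N A \<theta> \<phi>"
  unfolding thetanorm_def using supnorm_nonneg by simp

lemma thetanorm_pos:
  assumes "lipschitz_all \<phi>" "\<theta> \<in> {0<..<1}" "\<omega> \<in> SigmaA N A" "\<phi> \<omega> \<noteq> 0"
  shows "0 < thetanorm N A \<theta> \<phi>"
proof -
  have "0 < cmod (\<phi> \<omega>)" using assms(4) by simp
  also have "\<dots> \<le> supnorm N A \<phi>" by (rule supnorm_ge[OF assms(1,3)])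
  also have "\<dots> \<le> thetanorm N A \<theta> \<phi>" by (rule supnorm_le_thetanorm[OF assms(1,2)])
  finally show ?thesis .
qed

lemma thetanorm_add:
  assumes "lipschitz_all \<phi>" "lipschitz_all \<psi>" "\<theta> \<in> {0<..<1}"
  shows "thetanorm N A \<theta> (\<lambda>\<omega>. \<phi> \<omega> + \<psi> \<omega>) \<le> thetanorm N A \<theta> \<phi> + thetanorm N A \<theta> \<psi>"
proof -
  have "supnorm N A (\<lambda>\<omega>. \<phi> \<omega> + \<psi> \<omega>) \<le> supnorm N A \<phi> + supnorm N A \<psi>"
    by (rule supnorm_le)
       (use assms supnorm_nonneg supnorm_ge in \<open>auto intro!: norm_triangle_le add_mono\<close>)
  moreover have "lipconst N A \<theta> (\<lambda>\<omega>. \<phi> \<omega> + \<psi> \<omega>) \<le> lipconst N A \<theta> \<phi> + lipconst N A \<theta> \<psi>"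
    using assms lipconst_nonneg
    by (intro lipconst_le lipschitz_theta_add lipschitz_theta_lipconst) auto
  ultimately show ?thesis unfolding thetanorm_def by simp
qed

lemma thetanorm_scale_le:
  assumes "lipschitz_all \<phi>" "\<theta> \<in> {0<..<1}"
  shows "thetanorm N A \<theta> (\<lambda>\<omega>. c * \<phi> \<omega>) \<le> cmod c * thetanorm N A \<theta> \<phi>"
proof -
  have "supnorm N A (\<lambda>\<omega>. c * \<phi> \<omega>) \<le> cmod c * supnorm N A \<phi>"
    by (rule supnorm_le)
       (use assms supnorm_nonneg supnorm_ge in \<open>auto simp: norm_mult intro!: mult_left_mono\<close>)
  moreover have "lipconst N A \<theta> (\<lambda>\<omega>. c * \<phi> \<omega>) \<le> cmod c * lipconst N A \<theta> \<phi>"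
    using assms lipconst_nonneg
    by (intro lipconst_le lipschitz_theta_scale lipschitz_theta_lipconst) auto
  ultimately show ?thesis unfolding thetanorm_def by (simp add: distrib_left)
qed

lemma thetanorm_scale:
  assumes "lipschitz_all \<phi>" "\<theta> \<in> {0<..<1}"
  shows "thetanorm N A \<theta> (\<lambda>\<omega>. c * \<phi> \<omega>) = cmod c * thetanorm N A \<theta> \<phi>"
proof (cases "c = 0")
  case True
  have "thetanorm N A \<theta> (\<lambda>\<omega>. c * \<phi> \<omega>) \<le> 0" using thetanorm_scale_le[OF assms, of c] True by simp
  with thetanorm_nonneg[OF lipschitz_all_scale[OF assms(1), of c] assms(2)] True show ?thesis by simp
next
  case False
  have "(\<lambda>\<omega>. inverse c * (c * \<phi> \<omega>)) = \<phi>" using False by (simp add: field_simps)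
  with thetanorm_scale_le[OF lipschitz_all_scale[OF assms(1)] assms(2), of "inverse c" c]
  have "thetanorm N A \<theta> \<phi> \<le> cmod (inverse c) * thetanorm N A \<theta> (\<lambda>\<omega>. c * \<phi> \<omega>)"
    by simp
  then have "cmod c * thetanorm N A \<theta> \<phi>
      \<le> cmod c * (cmod (inverse c) * thetanorm N A \<theta> (\<lambda>\<omega>. c * \<phi> \<omega>))"
    by (rule mult_left_mono) simp
  also have "\<dots> = thetanorm N A \<theta> (\<lambda>\<omega>. c * \<phi> \<omega>)" using False by (simp add: norm_inverse)
  finally show ?thesis using thetanorm_scale_le[OF assms, of c] by simp
qed

lemma thetanorm_antimono:
  assumes "lipschitz_all \<phi>" "\<theta>' \<in> {0<..<1}" "\<theta> \<in> {0<..<1}" "\<theta>' \<le> \<theta>"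
  shows "thetanorm N A \<theta> \<phi> \<le> thetanorm N A \<theta>' \<phi>"
proof -
  have "lipschitz_theta \<theta> (lipconst N A \<theta>' \<phi>) \<phi>"
  proof (rule lipschitz_thetaI)
    fix \<omega> \<omega>' j assume o: "\<omega> \<in> SigmaA N A" "\<omega>' \<in> SigmaA N A" "agree j \<omega> \<omega>'"
    have "cmod (\<phi> \<omega> - \<phi> \<omega>') \<le> lipconst N A \<theta>' \<phi> * \<theta>' ^ j"
      by (rule lipschitz_thetaD[OF lipschitz_theta_lipconst[OF assms(1,2)] o])
    also have "\<dots> \<le> lipconst N A \<theta>' \<phi> * \<theta> ^ j"
      using assms lipconst_nonneg[OF assms(1,2)] by (intro mult_left_mono power_mono) auto
    finally show "cmod (\<phi> \<omega> - \<phi> \<omega>') \<le> lipconst N A \<theta>' \<phi> * \<theta> ^ j" .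
  qed
  then have "lipconst N A \<theta> \<phi> \<le> lipconst N A \<theta>' \<phi>"
    using assms lipconst_nonneg by (intro lipconst_le) auto
  then show ?thesis unfolding thetanorm_def by simp
qed

lemma cont_seminorm_V_single_norm:
  assumes "cont_seminorm_V N A p"
  obtains \<theta>0 K where "\<theta>0 \<in> {0<..<1}" "0 \<le> K"
    "\<And>\<phi>. \<phi> \<in> Vspace N A \<Longrightarrow> p \<phi> \<le> K * thetanorm N A \<theta>0 \<phi>"
proof -
  from assms obtain F C where F: "finite F" "F \<subseteq> {0<..<1}"
    and pF: "\<And>\<phi>. \<phi> \<in> Vspace N A \<Longrightarrow> p \<phi> \<le> C * (\<Sum>\<theta>\<in>F. thetanorm N A \<theta> \<phi>)"
    unfolding cont_seminorm_V_def by blast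
  define \<theta>0 where "\<theta>0 = Min (insert (1/2) F)"
  have \<theta>0: "\<theta>0 \<in> {0<..<1}"
    using F Min_in[of "insert (1/2) F"] unfolding \<theta>0_def by auto
  have \<theta>0_le: "\<theta>0 \<le> \<theta>" if "\<theta> \<in> F" for \<theta>
    unfolding \<theta>0_def using F(1) that by simp
  define K where "K = max C 0 * real (card F)"
  have "p \<phi> \<le> K * thetanorm N A \<theta>0 \<phi>" if \<phi>: "\<phi> \<in> Vspace N A" for \<phi>
  proof -
    have lip: "lipschitz_all \<phi>" using \<phi> by (rule Vspace_imp_lipschitz_all)
    have "0 \<le> (\<Sum>\<theta>\<in>F. thetanorm N A \<theta> \<phi>)"
      using F(2) thetanorm_nonneg[OF lip] by (intro sum_nonneg) auto
    then have "p \<phi> \<le> max C 0 * (\<Sum>\<theta>\<in>F. thetanorm N A \<theta> \<phi>)"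
      using pF[OF \<phi>] by (meson max.cobounded1 mult_right_mono order_trans)
    also have "\<dots> \<le> max C 0 * (\<Sum>\<theta>\<in>F. thetanorm N A \<theta>0 \<phi>)"
      using F(2) \<theta>0_le by (intro mult_left_mono sum_mono thetanorm_antimono[OF lip \<theta>0]) auto
    finally show ?thesis unfolding K_def by (simp add: mult.assoc)
  qed
  moreover have "0 \<le> K" unfolding K_def by simp
  ultimately show thesis using that \<theta>0 by blast
qed

section \<open>Seminorms and the natural maps between completions\<close>

context
  fixes p :: "((nat \<Rightarrow> nat) \<Rightarrow> complex) \<Rightarrow> real"
  assumes p: "seminorm_V N A p"
begin

lemma seminorm_V_add:
  "\<phi> \<in> Vspace N A \<Longrightarrow> \<psi> \<in> Vspace N A \<Longrightarrow> p (\<lambda>\<omega>. \<phi> \<omega> + \<psi> \<omega>) \<le> p \<phi> + p \<psi>"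
  using p unfolding seminorm_V_def by blast

lemma seminorm_V_scale: "\<phi> \<in> Vspace N A \<Longrightarrow> p (\<lambda>\<omega>. c * \<phi> \<omega>) = cmod c * p \<phi>"
  using p unfolding seminorm_V_def by blast

lemma seminorm_V_zero: "p (\<lambda>\<omega>. 0) = 0"
  using seminorm_V_scale[OF Vspace_zero, of 0] by simp

lemma seminorm_V_nonneg:
  assumes "\<phi> \<in> Vspace N A"
  shows "0 \<le> p \<phi>"
  using seminorm_V_add[OF assms Vspace_scale[OF assms, of "-1"]] seminorm_V_scale[OF assms, of "-1"]
  by (simp add: seminorm_V_zero)

lemma seminorm_V_minus_commute:
  "\<phi> \<in> Vspace N A \<Longrightarrow> \<psi> \<in> Vspace N A \<Longrightarrow> p (\<lambda>\<omega>. \<phi> \<omega> - \<psi> \<omega>) = p (\<lambda>\<omega>. \<psi> \<omega> - \<phi> \<omega>)"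
  using seminorm_V_scale[OF Vspace_diff, of \<phi> \<psi> "-1"] by simp

lemma seminorm_V_diff_triangle:
  assumes "\<phi> \<in> Vspace N A" "\<psi> \<in> Vspace N A" "\<chi> \<in> Vspace N A"
  shows "p (\<lambda>\<omega>. \<phi> \<omega> - \<chi> \<omega>) \<le> p (\<lambda>\<omega>. \<phi> \<omega> - \<psi> \<omega>) + p (\<lambda>\<omega>. \<psi> \<omega> - \<chi> \<omega>)"
  using seminorm_V_add[OF Vspace_diff[OF assms(1,2)] Vspace_diff[OF assms(2,3)]] by simp

lemma seminorm_V_reverse_triangle:
  assumes "\<phi> \<in> Vspace N A" "\<psi> \<in> Vspace N A"
  shows "\<bar>p \<phi> - p \<psi>\<bar> \<le> p (\<lambda>\<omega>. \<phi> \<omega> - \<psi> \<omega>)"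
proof -
  have "p \<phi> \<le> p (\<lambda>\<omega>. \<phi> \<omega> - \<psi> \<omega>) + p \<psi>"
    using seminorm_V_add[OF Vspace_diff[OF assms] assms(2)] by simp
  moreover have "p \<psi> \<le> p (\<lambda>\<omega>. \<psi> \<omega> - \<phi> \<omega>) + p \<phi>"
    using seminorm_V_add[OF Vspace_diff[OF assms(2,1)] assms(1)] by simp
  ultimately show ?thesis using seminorm_V_minus_commute[OF assms] by linarith
qed

lemma seminorm_V_sum:
  "finite I \<Longrightarrow> (\<And>i. i \<in> I \<Longrightarrow> g i \<in> Vspace N A) \<Longrightarrow>
     p (\<lambda>\<omega>. \<Sum>i\<in>I. g i \<omega>) \<le> (\<Sum>i\<in>I. p (g i))"
proof (induction I rule: finite_induct)
  case empty
  then show ?case using seminorm_V_zero by simp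
next
  case (insert i I)
  then have "p (\<lambda>\<omega>. \<Sum>i\<in>insert i I. g i \<omega>) \<le> p (g i) + p (\<lambda>\<omega>. \<Sum>i\<in>I. g i \<omega>)"
    using seminorm_V_add[of "g i" "\<lambda>\<omega>. \<Sum>i\<in>I. g i \<omega>"] Vspace_sum[of I g] by simp
  then show ?case using insert by simp
qed

lemma pCauchy_seminorm_tendsto:
  assumes s: "pCauchy N A p s"
  shows "(\<lambda>k. p (s k)) \<longlonglongrightarrow> cnorm p s"
proof -
  have "Cauchy (\<lambda>k. p (s k))"
  proof (rule metric_CauchyI)
    fix e :: real assume "0 < e"
    with s obtain K where K: "\<forall>k\<ge>K. \<forall>l\<ge>K. p (\<lambda>\<omega>. s k \<omega> - s l \<omega>) < e"
      unfolding pCauchy_def by blast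
    have "dist (p (s k)) (p (s l)) < e" if "k \<ge> K" "l \<ge> K" for k l
    proof -
      have "dist (p (s k)) (p (s l)) \<le> p (\<lambda>\<omega>. s k \<omega> - s l \<omega>)"
        using seminorm_V_reverse_triangle s unfolding pCauchy_def dist_real_def by blast
      also have "\<dots> < e" using K that by blast
      finally show ?thesis .
    qed
    then show "\<exists>M. \<forall>k\<ge>M. \<forall>l\<ge>M. dist (p (s k)) (p (s l)) < e" by blast
  qed
  then show ?thesis unfolding cnorm_def by (simp add: Cauchy_convergent_iff convergent_LIMSEQ_iff)
qed

end

context
  fixes p q :: "((nat \<Rightarrow> nat) \<Rightarrow> complex) \<Rightarrow> real"
    and lam :: "nat \<Rightarrow> complex" and f :: "nat \<Rightarrow> ((nat \<Rightarrow> nat) \<Rightarrow> complex) \<Rightarrow> complex"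
    and y :: "nat \<Rightarrow> (nat \<Rightarrow> nat) \<Rightarrow> complex" and C D :: real and \<tau> :: "nat \<Rightarrow> real"
  assumes p: "seminorm_V N A p" and q: "seminorm_V N A q"
    and p_le_q: "\<And>\<phi>. \<phi> \<in> Vspace N A \<Longrightarrow> p \<phi> \<le> q \<phi>"
    and f_add: "\<And>i \<phi> \<psi>. \<phi> \<in> Vspace N A \<Longrightarrow> \<psi> \<in> Vspace N A \<Longrightarrow>
                   f i (\<lambda>\<omega>. \<phi> \<omega> + \<psi> \<omega>) = f i \<phi> + f i \<psi>"
    and f_scale: "\<And>i c \<phi>. \<phi> \<in> Vspace N A \<Longrightarrow> f i (\<lambda>\<omega>. c * \<phi> \<omega>) = c * f i \<phi>"
    and f_bound: "\<And>i \<phi>. \<phi> \<in> Vspace N A \<Longrightarrow> cmod (f i \<phi>) \<le> C * q \<phi>"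
    and y: "\<And>i. y i \<in> Vspace N A"
    and approx: "\<And>M \<phi>. \<phi> \<in> Vspace N A \<Longrightarrow>
                   p (\<lambda>\<omega>. \<phi> \<omega> - (\<Sum>n<M. lam n * f n \<phi> * y n \<omega>)) \<le> D * q \<phi> * \<tau> M"
    and \<tau>: "\<tau> \<longlonglongrightarrow> 0"
begin

lemma functional_diff:
  "\<phi> \<in> Vspace N A \<Longrightarrow> \<psi> \<in> Vspace N A \<Longrightarrow> f i (\<lambda>\<omega>. \<phi> \<omega> - \<psi> \<omega>) = f i \<phi> - f i \<psi>"
  using f_add[OF _ Vspace_scale, of \<phi> \<psi> i "-1"] f_scale[of \<psi> i "-1"] by simp

lemma functional_limit:
  assumes s: "pCauchy N A q s"
  shows "(\<lambda>k. f i (s k)) \<longlonglongrightarrow> lim (\<lambda>k. f i (s k))"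
proof -
  have sV: "s k \<in> Vspace N A" for k using s unfolding pCauchy_def by blast
  have "Cauchy (\<lambda>k. f i (s k))"
  proof (rule metric_CauchyI)
    fix e :: real assume "0 < e"
    then have "0 < e / (\<bar>C\<bar> + 1)" by simp
    with s obtain K where K: "\<forall>k\<ge>K. \<forall>l\<ge>K. q (\<lambda>\<omega>. s k \<omega> - s l \<omega>) < e / (\<bar>C\<bar> + 1)"
      unfolding pCauchy_def by blast
    have "dist (f i (s k)) (f i (s l)) < e" if "k \<ge> K" "l \<ge> K" for k l
    proof -
      have "dist (f i (s k)) (f i (s l)) = cmod (f i (\<lambda>\<omega>. s k \<omega> - s l \<omega>))"
        by (simp add: dist_norm functional_diff[OF sV sV])
      also have "\<dots> \<le> C * q (\<lambda>\<omega>. s k \<omega> - s l \<omega>)" by (rule f_bound[OF Vspace_diff[OF sV sV]])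
      also have "\<dots> \<le> (\<bar>C\<bar> + 1) * q (\<lambda>\<omega>. s k \<omega> - s l \<omega>)"
        using seminorm_V_nonneg[OF q Vspace_diff[OF sV sV]] by (intro mult_right_mono) auto
      also have "\<dots> < (\<bar>C\<bar> + 1) * (e / (\<bar>C\<bar> + 1))"
        using K that by (intro mult_strict_left_mono) auto
      finally show ?thesis by simp
    qed
    then show "\<exists>M. \<forall>k\<ge>M. \<forall>l\<ge>M. dist (f i (s k)) (f i (s l)) < e" by blast
  qed
  then show ?thesis by (simp add: Cauchy_convergent_iff convergent_LIMSEQ_iff)
qed

lemma partial_sum_deviation:
  assumes \<phi>: "\<phi> \<in> Vspace N A"
  shows "p (\<lambda>\<omega>. \<phi> \<omega> - (\<Sum>n<M. lam n * a n * y n \<omega>))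
           \<le> D * q \<phi> * \<tau> M + (\<Sum>n<M. cmod (lam n * (f n \<phi> - a n)) * p (y n))"
proof -
  define S where "S = (\<lambda>\<omega>. \<Sum>n<M. lam n * f n \<phi> * y n \<omega>)"
  define T where "T = (\<lambda>\<omega>. \<Sum>n<M. lam n * a n * y n \<omega>)"
  have SV: "S \<in> Vspace N A" and TV: "T \<in> Vspace N A"
    unfolding S_def T_def by (auto intro!: Vspace_sum Vspace_scale y)
  have "(\<lambda>\<omega>. S \<omega> - T \<omega>) = (\<lambda>\<omega>. \<Sum>n<M. lam n * (f n \<phi> - a n) * y n \<omega>)"
    unfolding S_def T_def by (simp add: sum_subtractf[symmetric] algebra_simps)
  then have "p (\<lambda>\<omega>. S \<omega> - T \<omega>) \<le> (\<Sum>n<M. p (\<lambda>\<omega>. lam n * (f n \<phi> - a n) * y n \<omega>))"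
    using seminorm_V_sum[OF p, of "{..<M}" "\<lambda>n \<omega>. lam n * (f n \<phi> - a n) * y n \<omega>"]
    by (simp add: Vspace_scale y)
  also have "\<dots> = (\<Sum>n<M. cmod (lam n * (f n \<phi> - a n)) * p (y n))"
    by (simp add: seminorm_V_scale[OF p y])
  finally have "p (\<lambda>\<omega>. S \<omega> - T \<omega>) \<le> (\<Sum>n<M. cmod (lam n * (f n \<phi> - a n)) * p (y n))" .
  moreover have "p (\<lambda>\<omega>. \<phi> \<omega> - S \<omega>) \<le> D * q \<phi> * \<tau> M"
    unfolding S_def by (rule approx[OF \<phi>])
  moreover have "p (\<lambda>\<omega>. \<phi> \<omega> - T \<omega>) \<le> p (\<lambda>\<omega>. \<phi> \<omega> - S \<omega>) + p (\<lambda>\<omega>. S \<omega> - T \<omega>)"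
    by (rule seminorm_V_diff_triangle[OF p \<phi> SV TV])
  ultimately show ?thesis unfolding T_def by linarith
qed

lemma partial_sums_tendsto_completion:
  assumes s: "pCauchy N A q s"
  shows "(\<lambda>M. cdist p s (\<lambda>k \<omega>. \<Sum>n<M. lam n * lim (\<lambda>k. f n (s k)) * y n \<omega>)) \<longlonglongrightarrow> 0"
proof -
  define F where "F n = lim (\<lambda>k. f n (s k))" for n
  define T where "T M = (\<lambda>\<omega>. \<Sum>n<M. lam n * F n * y n \<omega>)" for M
  have sV: "s k \<in> Vspace N A" for k using s unfolding pCauchy_def by blast
  have TV: "T M \<in> Vspace N A" for M unfolding T_def by (auto intro!: Vspace_sum Vspace_scale y)
  have F: "(\<lambda>k. f n (s k)) \<longlonglongrightarrow> F n" for n unfolding F_def by (rule functional_limit[OF s])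
  have dist_lim: "(\<lambda>k. p (\<lambda>\<omega>. s k \<omega> - T M \<omega>)) \<longlonglongrightarrow> cdist p s (\<lambda>k. T M)" for M
  proof -
    have "pCauchy N A p (\<lambda>k \<omega>. s k \<omega> - T M \<omega>)"
      unfolding pCauchy_def
    proof (intro conjI allI impI)
      show "(\<lambda>\<omega>. s k \<omega> - T M \<omega>) \<in> Vspace N A" for k using sV TV by (rule Vspace_diff)
      fix e :: real assume "0 < e"
      with s obtain K where K: "\<forall>k\<ge>K. \<forall>l\<ge>K. q (\<lambda>\<omega>. s k \<omega> - s l \<omega>) < e"
        unfolding pCauchy_def by blast
      have "p (\<lambda>\<omega>. s k \<omega> - T M \<omega> - (s l \<omega> - T M \<omega>)) < e" if "k \<ge> K" "l \<ge> K" for k l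
      proof -
        have "p (\<lambda>\<omega>. s k \<omega> - T M \<omega> - (s l \<omega> - T M \<omega>)) = p (\<lambda>\<omega>. s k \<omega> - s l \<omega>)" by simp
        also have "\<dots> \<le> q (\<lambda>\<omega>. s k \<omega> - s l \<omega>)" by (rule p_le_q[OF Vspace_diff[OF sV sV]])
        also have "\<dots> < e" using K that by blast
        finally show ?thesis .
      qed
      then show "\<exists>K. \<forall>k\<ge>K. \<forall>l\<ge>K. p (\<lambda>\<omega>. s k \<omega> - T M \<omega> - (s l \<omega> - T M \<omega>)) < e"
        by blast
    qed
    from pCauchy_seminorm_tendsto[OF p this] show ?thesis by (simp add: cnorm_def cdist_def)
  qed
  have "(\<lambda>k. \<Sum>n<M. cmod (lam n * (f n (s k) - F n)) * p (y n))
          \<longlonglongrightarrow> (\<Sum>n<M. cmod (lam n * (F n - F n)) * p (y n))" for M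
    by (intro tendsto_intros F)
  then have lim_upper: "(\<lambda>k. D * q (s k) * \<tau> M + (\<Sum>n<M. cmod (lam n * (f n (s k) - F n)) * p (y n)))
               \<longlonglongrightarrow> D * cnorm q s * \<tau> M + 0" for M
    by (intro tendsto_intros pCauchy_seminorm_tendsto[OF q s]) simp
  have upper: "cdist p s (\<lambda>k. T M) \<le> D * cnorm q s * \<tau> M" for M
  proof -
    have "cdist p s (\<lambda>k. T M) \<le> D * cnorm q s * \<tau> M + 0"
    proof (rule LIMSEQ_le[OF dist_lim lim_upper])
      show "\<exists>N. \<forall>k\<ge>N. p (\<lambda>\<omega>. s k \<omega> - T M \<omega>)
              \<le> D * q (s k) * \<tau> M + (\<Sum>n<M. cmod (lam n * (f n (s k) - F n)) * p (y n))"
        unfolding T_def using partial_sum_deviation[OF sV] by blast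
    qed
    then show ?thesis by simp
  qed
  have lower: "0 \<le> cdist p s (\<lambda>k. T M)" for M
    by (rule LIMSEQ_le_const[OF dist_lim]) (auto intro!: seminorm_V_nonneg[OF p] Vspace_diff sV TV)
  have "(\<lambda>M. cdist p s (\<lambda>k. T M)) \<longlonglongrightarrow> 0"
  proof (rule tendsto_sandwich[where h = "\<lambda>M. D * cnorm q s * \<tau> M", OF _ _ tendsto_const])
    show "\<forall>\<^sub>F M in sequentially. 0 \<le> cdist p s (\<lambda>k. T M)"
      by (intro always_eventually allI lower)
    show "\<forall>\<^sub>F M in sequentially. cdist p s (\<lambda>k. T M) \<le> D * cnorm q s * \<tau> M"
      by (intro always_eventually allI upper)
    show "(\<lambda>M. D * cnorm q s * \<tau> M) \<longlonglongrightarrow> 0"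
      using tendsto_mult_left[OF \<tau>, of "D * cnorm q s"] by simp
  qed
  then show ?thesis unfolding T_def F_def .
qed

lemma nuclear_natmapI:
  assumes lam: "summable (\<lambda>n. cmod (lam n))" and y_bound: "\<And>i. p (y i) \<le> B"
  shows "nuclear_natmap N A q p"
  unfolding nuclear_natmap_def
proof (intro exI[of _ lam] exI[of _ "\<lambda>i s. lim (\<lambda>k. f i (s k))"] exI[of _ "\<lambda>i k. y i"]
    conjI allI impI)
  show "summable (\<lambda>n. cmod (lam n))" by (rule lam)
  show "lim (\<lambda>k. f i (\<lambda>\<omega>. s k \<omega> + t k \<omega>)) = lim (\<lambda>k. f i (s k)) + lim (\<lambda>k. f i (t k))"
    if "pCauchy N A q s" "pCauchy N A q t" for i s t
  proof -
    have "(\<lambda>k. f i (\<lambda>\<omega>. s k \<omega> + t k \<omega>)) = (\<lambda>k. f i (s k) + f i (t k))"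
      using that by (simp add: f_add pCauchy_def)
    then show ?thesis
      using tendsto_add[OF functional_limit[OF that(1)] functional_limit[OF that(2)]]
      by (simp add: limI)
  qed
  show "lim (\<lambda>k. f i (\<lambda>\<omega>. c * s k \<omega>)) = c * lim (\<lambda>k. f i (s k))" if "pCauchy N A q s" for i s c
  proof -
    have "(\<lambda>k. f i (\<lambda>\<omega>. c * s k \<omega>)) = (\<lambda>k. c * f i (s k))"
      using that by (simp add: f_scale pCauchy_def)
    then show ?thesis using tendsto_mult_left[OF functional_limit[OF that]] by (simp add: limI)
  qed
  have "cmod (lim (\<lambda>k. f i (s k))) \<le> C * cnorm q s" if s: "pCauchy N A q s" for i s
  proof (rule LIMSEQ_le)
    show "(\<lambda>k. cmod (f i (s k))) \<longlonglongrightarrow> cmod (lim (\<lambda>k. f i (s k)))"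
      by (intro tendsto_norm functional_limit s)
    show "(\<lambda>k. C * q (s k)) \<longlonglongrightarrow> C * cnorm q s"
      by (intro tendsto_mult_left pCauchy_seminorm_tendsto[OF q s])
    show "\<exists>N. \<forall>k\<ge>N. cmod (f i (s k)) \<le> C * q (s k)"
      using f_bound s unfolding pCauchy_def by blast
  qed
  then show "\<exists>C. \<forall>i s. pCauchy N A q s \<longrightarrow> cmod (lim (\<lambda>k. f i (s k))) \<le> C * cnorm q s" by blast
  show "pCauchy N A p (\<lambda>k. y i)" for i
    unfolding pCauchy_def using y seminorm_V_zero[OF p] by simp
  show "\<exists>B. \<forall>i. cnorm p (\<lambda>k. y i) \<le> B"
    unfolding cnorm_def using y_bound by auto
  show "(\<lambda>M. cdist p s (\<lambda>k \<omega>. \<Sum>n<M. lam n * lim (\<lambda>k. f n (s k)) * y n \<omega>)) \<longlonglongrightarrow> 0"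
    if "pCauchy N A q s" for s
    by (rule partial_sums_tendsto_completion[OF that])
qed

end

section \<open>Expansion along cylinders\<close>

definition cyl_ind :: "nat list \<Rightarrow> (nat \<Rightarrow> nat) \<Rightarrow> complex" where
  "cyl_ind w \<omega> = (if \<omega> \<in> SigmaA N A \<and> in_cylinder w \<omega> then 1 else 0)"

lemma lipschitz_theta_cyl_ind:
  assumes \<theta>: "\<theta> \<in> {0<..<1}"
  shows "lipschitz_theta \<theta> (1 / \<theta> ^ length w) (cyl_ind w)"
proof (rule lipschitz_thetaI)
  fix \<omega> \<omega>' j assume o: "\<omega> \<in> SigmaA N A" "\<omega>' \<in> SigmaA N A" "agree j \<omega> \<omega>'"
  show "cmod (cyl_ind w \<omega> - cyl_ind w \<omega>') \<le> 1 / \<theta> ^ length w * \<theta> ^ j"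
  proof (cases "length w \<le> j")
    case True
    then have "in_cylinder w \<omega> \<longleftrightarrow> in_cylinder w \<omega>'"
      using o(3) agree_mono in_cylinder_cong by blast
    then show ?thesis unfolding cyl_ind_def using o \<theta> by simp
  next
    case False
    have "cmod (cyl_ind w \<omega> - cyl_ind w \<omega>') \<le> 1" unfolding cyl_ind_def by auto
    also have "1 \<le> 1 / \<theta> ^ length w * \<theta> ^ j" using \<theta> False by (simp add: power_decreasing)
    finally show ?thesis .
  qed
qed

lemma cyl_ind_Vspace: "cyl_ind w \<in> Vspace N A"
proof -
  have "lipschitz_all (cyl_ind w)"
    unfolding lipschitz_all_def using lipschitz_theta_cyl_ind by blast
  then show ?thesis unfolding Vspace_iff by (simp add: cyl_ind_def)
qed

lemma thetanorm_cyl_ind: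
  assumes "\<theta> \<in> {0<..<1}"
  shows "thetanorm N A \<theta> (cyl_ind w) \<le> 1 + 1 / \<theta> ^ length w"
proof -
  have "supnorm N A (cyl_ind w) \<le> 1" by (rule supnorm_le) (auto simp: cyl_ind_def)
  moreover have "lipconst N A \<theta> (cyl_ind w) \<le> 1 / \<theta> ^ length w"
    using assms by (intro lipconst_le lipschitz_theta_cyl_ind) auto
  ultimately show ?thesis unfolding thetanorm_def by simp
qed

text \<open>The sample point of an empty cylinder is unspecified, so its coefficient is set to 0.\<close>

definition cyl_coeff :: "nat list \<Rightarrow> ((nat \<Rightarrow> nat) \<Rightarrow> complex) \<Rightarrow> complex" where
  "cyl_coeff w \<phi> =
     (if \<exists>x\<in>SigmaA N A. in_cylinder w x
      then \<phi> (cyl_point w) - (if w = [] then 0 else \<phi> (cyl_point (butlast w)))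
      else 0)"

lemma cyl_coeff_add: "cyl_coeff w (\<lambda>\<omega>. \<phi> \<omega> + \<psi> \<omega>) = cyl_coeff w \<phi> + cyl_coeff w \<psi>"
  unfolding cyl_coeff_def by auto

lemma cyl_coeff_scale: "cyl_coeff w (\<lambda>\<omega>. c * \<phi> \<omega>) = c * cyl_coeff w \<phi>"
  unfolding cyl_coeff_def by (auto simp: right_diff_distrib)

lemma cyl_coeff_bound:
  assumes \<phi>: "lipschitz_all \<phi>" and \<theta>: "\<theta> \<in> {0<..<1}"
  shows "cmod (cyl_coeff w \<phi>) \<le> thetanorm N A \<theta> \<phi> / \<theta> * \<theta> ^ length w"
proof (cases "\<exists>x\<in>SigmaA N A. in_cylinder w x")
  case False
  then show ?thesis unfolding cyl_coeff_def using thetanorm_nonneg[OF \<phi> \<theta>] \<theta> by simp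
next
  case True
  then obtain x where x: "x \<in> SigmaA N A" "in_cylinder w x" by blast
  show ?thesis
  proof (cases w rule: rev_cases)
    case Nil
    have "cmod (cyl_coeff w \<phi>) \<le> supnorm N A \<phi>"
      using True Nil cyl_point(1)[OF x] supnorm_ge[OF \<phi>] unfolding cyl_coeff_def by simp
    also have "\<dots> \<le> thetanorm N A \<theta> \<phi>" by (rule supnorm_le_thetanorm[OF \<phi> \<theta>])
    also have "\<dots> \<le> thetanorm N A \<theta> \<phi> / \<theta>"
      using thetanorm_nonneg[OF \<phi> \<theta>] \<theta> by (simp add: le_divide_eq mult_left_le)
    finally show ?thesis using Nil by simp
  next
    case (snoc v a)
    have w: "cyl_point w \<in> SigmaA N A" "in_cylinder w (cyl_point w)"
      using cyl_point[OF x] by auto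
    moreover have v: "cyl_point v \<in> SigmaA N A" "in_cylinder v (cyl_point v)"
      using cyl_point[OF x(1) in_cylinder_butlast[OF x(2)]] snoc by auto
    ultimately have "agree (length v) (cyl_point w) (cyl_point v)"
      using in_cylinder_agree in_cylinder_butlast snoc by (metis butlast_snoc)
    then have "cmod (cyl_coeff w \<phi>) \<le> lipconst N A \<theta> \<phi> * \<theta> ^ length v"
      using True snoc lipschitz_thetaD[OF lipschitz_theta_lipconst[OF \<phi> \<theta>] w(1) v(1)]
      unfolding cyl_coeff_def by simp
    also have "\<dots> \<le> thetanorm N A \<theta> \<phi> * \<theta> ^ length v"
      using lipconst_le_thetanorm[OF \<phi>] \<theta> by (intro mult_right_mono) auto
    also have "\<dots> = thetanorm N A \<theta> \<phi> / \<theta> * \<theta> ^ length w" using \<theta> snoc by simp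
    finally show ?thesis .
  qed
qed

definition cyl_approx :: "nat \<Rightarrow> ((nat \<Rightarrow> nat) \<Rightarrow> complex) \<Rightarrow> (nat \<Rightarrow> nat) \<Rightarrow> complex" where
  "cyl_approx L \<phi> = (\<lambda>\<omega>. \<Sum>w\<in>words_upto L. cyl_coeff w \<phi> * cyl_ind w \<omega>)"

lemma cyl_approx_Vspace: "cyl_approx L \<phi> \<in> Vspace N A"
  unfolding cyl_approx_def by (intro Vspace_sum finite_words_upto Vspace_scale cyl_ind_Vspace)

lemma cyl_approx_eq:
  assumes \<omega>: "\<omega> \<in> SigmaA N A"
  shows "cyl_approx L \<phi> \<omega> = \<phi> (cyl_point (map \<omega> [0..<L]))"
proof (induction L)
  case 0
  have "in_cylinder [] \<omega>" by (simp add: in_cylinder_def)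
  then show ?case
    unfolding cyl_approx_def words_upto_0 using \<omega> by (auto simp: cyl_coeff_def cyl_ind_def)
next
  case (Suc L)
  define w0 where "w0 = map \<omega> [0..<Suc L]"
  have "(\<Sum>w\<in>words (Suc L). cyl_coeff w \<phi> * cyl_ind w \<omega>)
      = (\<Sum>w\<in>words (Suc L). if w = w0 then cyl_coeff w0 \<phi> else 0)"
  proof (rule sum.cong[OF refl])
    fix w assume "w \<in> words (Suc L)"
    then have "in_cylinder w \<omega> \<longleftrightarrow> w = w0"
      unfolding words_def in_cylinder_def w0_def by auto
    then show "cyl_coeff w \<phi> * cyl_ind w \<omega> = (if w = w0 then cyl_coeff w0 \<phi> else 0)"
      unfolding cyl_ind_def using \<omega> by auto
  qed
  also have "\<dots> = cyl_coeff w0 \<phi>"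
    using prefix_in_words[OF \<omega>, of "Suc L"] finite_words unfolding w0_def[symmetric] by simp
  also have "\<dots> = \<phi> (cyl_point w0) - \<phi> (cyl_point (map \<omega> [0..<L]))"
  proof -
    have "in_cylinder w0 \<omega>" "w0 \<noteq> []" "butlast w0 = map \<omega> [0..<L]"
      unfolding w0_def by (simp_all only: in_cylinder_prefix) simp_all
    then show ?thesis using \<omega> unfolding cyl_coeff_def by auto
  qed
  finally have "(\<Sum>w\<in>words (Suc L). cyl_coeff w \<phi> * cyl_ind w \<omega>)
      = \<phi> (cyl_point w0) - \<phi> (cyl_point (map \<omega> [0..<L]))" .
  moreover have "cyl_approx (Suc L) \<phi> \<omega>
      = cyl_approx L \<phi> \<omega> + (\<Sum>w\<in>words (Suc L). cyl_coeff w \<phi> * cyl_ind w \<omega>)"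
    unfolding cyl_approx_def words_upto_Suc
    by (rule sum.union_disjoint) (use finite_words_upto finite_words words_upto_disjoint_words in auto)
  ultimately show ?case using Suc w0_def by simp
qed

lemma thetanorm_cyl_approx_error:
  assumes \<phi>: "lipschitz_all \<phi>" and \<theta>': "\<theta>' \<in> {0<..<1}" and \<theta>: "\<theta> \<in> {0<..<1}" and "\<theta>' \<le> \<theta>"
  shows "thetanorm N A \<theta> (\<lambda>\<omega>. \<phi> \<omega> - cyl_approx L \<phi> \<omega>) \<le> 3 * lipconst N A \<theta>' \<phi> * (\<theta>' / \<theta>) ^ L"
proof -
  define \<Lambda> where "\<Lambda> = lipconst N A \<theta>' \<phi>"
  define r where "r = \<theta>' / \<theta>"
  have \<Lambda>: "0 \<le> \<Lambda>" "lipschitz_theta \<theta>' \<Lambda> \<phi>"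
    unfolding \<Lambda>_def using lipconst_nonneg lipschitz_theta_lipconst \<phi> \<theta>' by auto
  have r: "0 < r" "r \<le> 1" "\<theta>' = r * \<theta>" using \<theta> \<theta>' \<open>\<theta>' \<le> \<theta>\<close> unfolding r_def by auto
  have near: "cmod (\<phi> \<omega> - cyl_approx L \<phi> \<omega>) \<le> \<Lambda> * r ^ L * \<theta> ^ L" if "\<omega> \<in> SigmaA N A" for \<omega>
    using lipschitz_thetaD[OF \<Lambda>(2) that cyl_point_prefix[OF that]] r(3)
    unfolding cyl_approx_eq[OF that] by (simp add: power_mult_distrib mult.assoc)
  have "supnorm N A (\<lambda>\<omega>. \<phi> \<omega> - cyl_approx L \<phi> \<omega>) \<le> \<Lambda> * r ^ L"
  proof (rule supnorm_le)
    fix \<omega> assume "\<omega> \<in> SigmaA N A"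
    have "\<theta> ^ L \<le> 1" using \<theta> by (simp add: power_le_one)
    then have "\<Lambda> * r ^ L * \<theta> ^ L \<le> \<Lambda> * r ^ L"
      using \<Lambda>(1) r(1) by (intro mult_left_le) auto
    then show "cmod (\<phi> \<omega> - cyl_approx L \<phi> \<omega>) \<le> \<Lambda> * r ^ L"
      using near[OF \<open>\<omega> \<in> SigmaA N A\<close>] by simp
  qed (use \<Lambda>(1) r in simp)
  moreover have "lipconst N A \<theta> (\<lambda>\<omega>. \<phi> \<omega> - cyl_approx L \<phi> \<omega>) \<le> 2 * \<Lambda> * r ^ L"
  proof (rule lipconst_le[OF lipschitz_thetaI _ \<theta>])
    fix \<omega> \<omega>' j assume o: "\<omega> \<in> SigmaA N A" "\<omega>' \<in> SigmaA N A" "agree j \<omega> \<omega>'"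
    show "cmod (\<phi> \<omega> - cyl_approx L \<phi> \<omega> - (\<phi> \<omega>' - cyl_approx L \<phi> \<omega>')) \<le> 2 * \<Lambda> * r ^ L * \<theta> ^ j"
    proof (cases "L \<le> j")
      case True
      then have prefix: "map \<omega> [0..<L] = map \<omega>' [0..<L]"
        using agree_prefix_eq agree_mono o(3) by blast
      have "cyl_approx L \<phi> \<omega> = cyl_approx L \<phi> \<omega>'"
        unfolding cyl_approx_eq[OF o(1)] cyl_approx_eq[OF o(2)] prefix ..
      then have "cmod (\<phi> \<omega> - cyl_approx L \<phi> \<omega> - (\<phi> \<omega>' - cyl_approx L \<phi> \<omega>')) = cmod (\<phi> \<omega> - \<phi> \<omega>')"
        by simp
      also have "\<dots> \<le> \<Lambda> * r ^ j * \<theta> ^ j"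
        using lipschitz_thetaD[OF \<Lambda>(2) o] r(3) by (simp add: power_mult_distrib mult.assoc)
      also have "\<dots> \<le> 2 * \<Lambda> * r ^ L * \<theta> ^ j"
        using \<Lambda>(1) r \<theta> True by (intro mult_right_mono mult_mono power_decreasing) auto
      finally show ?thesis .
    next
      case False
      have "cmod (\<phi> \<omega> - cyl_approx L \<phi> \<omega> - (\<phi> \<omega>' - cyl_approx L \<phi> \<omega>'))
          \<le> cmod (\<phi> \<omega> - cyl_approx L \<phi> \<omega>) + cmod (\<phi> \<omega>' - cyl_approx L \<phi> \<omega>')"
        by (rule norm_triangle_ineq4)
      also have "\<dots> \<le> 2 * \<Lambda> * r ^ L * \<theta> ^ L" using near[OF o(1)] near[OF o(2)] by simp
      also have "\<dots> \<le> 2 * \<Lambda> * r ^ L * \<theta> ^ j"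
        using \<Lambda>(1) r \<theta> False by (intro mult_left_mono power_decreasing) auto
      finally show ?thesis .
    qed
  qed (use \<Lambda>(1) r in simp)
  ultimately show ?thesis unfolding thetanorm_def \<Lambda>_def r_def by simp
qed

end

section \<open>A nuclear representation\<close>

locale nuclear_expansion = subshift +
  fixes \<theta>0 :: real
  assumes \<theta>0: "\<theta>0 \<in> {0<..<1}" and N_pos: "1 \<le> N"
begin

definition \<rho> :: real where "\<rho> = 1 / (2 * real N)"

definition \<theta>1 :: real where "\<theta>1 = \<rho> * \<theta>0"

lemma \<rho>: "0 < \<rho>" "\<rho> < 1" "real N * \<rho> = 1 / 2"
  using N_pos unfolding \<rho>_def by (auto simp: field_simps)

lemma \<theta>1: "\<theta>1 \<in> {0<..<1}" "\<theta>1 \<le> \<theta>0" "\<theta>1 / \<theta>0 = \<rho>"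
proof -
  show "\<theta>1 \<le> \<theta>0" unfolding \<theta>1_def using \<rho> \<theta>0 by (intro mult_left_le_one_le) auto
  moreover have "0 < \<theta>1" unfolding \<theta>1_def using \<rho> \<theta>0 by simp
  ultimately show "\<theta>1 \<in> {0<..<1}" using \<theta>0 by auto
  show "\<theta>1 / \<theta>0 = \<rho>" unfolding \<theta>1_def using \<theta>0 by simp
qed

text \<open>The index \<open>n\<close> stands for the word \<open>list_decode n\<close>; indices of words not over
  \<open>{1..N}\<close> get weight 0.\<close>

definition nuc_weight :: "nat \<Rightarrow> complex" where
  "nuc_weight n =
     (if set (list_decode n) \<subseteq> {1..N} then of_real (\<rho> ^ length (list_decode n)) else 0)"

definition nuc_coord :: "nat \<Rightarrow> ((nat \<Rightarrow> nat) \<Rightarrow> complex) \<Rightarrow> complex" where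
  "nuc_coord n \<phi> = cyl_coeff (list_decode n) \<phi> / of_real (\<theta>1 ^ length (list_decode n))"

definition nuc_vec :: "nat \<Rightarrow> (nat \<Rightarrow> nat) \<Rightarrow> complex" where
  "nuc_vec n = (\<lambda>\<omega>. of_real (\<theta>0 ^ length (list_decode n)) * cyl_ind (list_decode n) \<omega>)"

lemma nuc_term_word:
  assumes "set w \<subseteq> {1..N}"
  shows "nuc_weight (list_encode w) * nuc_coord (list_encode w) \<phi> * nuc_vec (list_encode w) \<omega>
       = cyl_coeff w \<phi> * cyl_ind w \<omega>"
proof -
  define a b :: complex where "a = of_real (\<rho> ^ length w)" and "b = of_real (\<theta>0 ^ length w)"
  have ab: "of_real (\<theta>1 ^ length w) = a * b"
    unfolding a_def b_def \<theta>1_def by (simp add: power_mult_distrib)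
  have "a \<noteq> 0" "b \<noteq> 0" using \<rho> \<theta>0 unfolding a_def b_def by auto
  then show ?thesis
    using assms unfolding nuc_weight_def nuc_coord_def nuc_vec_def list_encode_inverse
      a_def[symmetric] b_def[symmetric] ab
    by (simp add: field_simps)
qed

lemma nuc_weight_eq_0:
  assumes "length (list_decode n) \<le> L" "n \<notin> list_encode ` words_upto L"
  shows "nuc_weight n = 0"
proof -
  have "\<not> set (list_decode n) \<subseteq> {1..N}"
  proof
    assume "set (list_decode n) \<subseteq> {1..N}"
    with assms(1) have "list_decode n \<in> words_upto L" unfolding words_upto_def by simp
    then have "n \<in> list_encode ` words_upto L" by (metis image_eqI list_decode_inverse)
    with assms(2) show False ..
  qed
  then show ?thesis unfolding nuc_weight_def by simp
qed

lemma nuc_coord_add: "nuc_coord n (\<lambda>\<omega>. \<phi> \<omega> + \<psi> \<omega>) = nuc_coord n \<phi> + nuc_coord n \<psi>"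
  unfolding nuc_coord_def cyl_coeff_add by (simp add: add_divide_distrib)

lemma nuc_coord_scale: "nuc_coord n (\<lambda>\<omega>. c * \<phi> \<omega>) = c * nuc_coord n \<phi>"
  unfolding nuc_coord_def cyl_coeff_scale by simp

lemma nuc_coord_bound:
  assumes "lipschitz_all \<phi>"
  shows "cmod (nuc_coord n \<phi>) \<le> thetanorm N A \<theta>1 \<phi> / \<theta>1"
proof -
  have "0 < \<theta>1 ^ length (list_decode n)" using \<theta>1 by simp
  then show ?thesis
    using cyl_coeff_bound[OF assms \<theta>1(1), of "list_decode n"]
    unfolding nuc_coord_def by (simp add: norm_divide divide_le_eq del: of_real_power)
qed

lemma nuc_vec_Vspace: "nuc_vec n \<in> Vspace N A"
  unfolding nuc_vec_def by (intro Vspace_scale cyl_ind_Vspace)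

lemma thetanorm_nuc_vec: "thetanorm N A \<theta>0 (nuc_vec n) \<le> 2"
proof -
  define l where "l = length (list_decode n)"
  have "lipschitz_all (cyl_ind (list_decode n))"
    using cyl_ind_Vspace by (rule Vspace_imp_lipschitz_all)
  then have "thetanorm N A \<theta>0 (nuc_vec n) = \<theta>0 ^ l * thetanorm N A \<theta>0 (cyl_ind (list_decode n))"
    unfolding nuc_vec_def l_def using thetanorm_scale[OF _ \<theta>0] \<theta>0 by (simp add: abs_of_pos norm_power)
  also have "\<dots> \<le> \<theta>0 ^ l * (1 + 1 / \<theta>0 ^ l)"
    using thetanorm_cyl_ind[OF \<theta>0] \<theta>0 unfolding l_def by (intro mult_left_mono) auto
  also have "\<dots> = \<theta>0 ^ l + 1" using \<theta>0 by (simp add: field_simps)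
  also have "\<dots> \<le> 2" using \<theta>0 by (simp add: power_le_one)
  finally show ?thesis .
qed

lemma sum_weights_words_upto: "(\<Sum>w\<in>words_upto L. \<rho> ^ length w) = 2 - (1/2) ^ L"
proof (induction L)
  case 0
  then show ?case by (simp add: words_upto_0)
next
  case (Suc L)
  have "(\<Sum>w\<in>words (Suc L). \<rho> ^ length w) = (\<Sum>w\<in>words (Suc L). \<rho> ^ Suc L)"
    by (rule sum.cong) (auto simp: words_def)
  also have "\<dots> = (real N * \<rho>) ^ Suc L" by (simp add: card_words power_mult_distrib)
  also have "\<dots> = (1/2) ^ Suc L" by (simp only: \<rho>(3))
  finally have "(\<Sum>w\<in>words (Suc L). \<rho> ^ length w) = (1/2) ^ Suc L" .
  moreover have "(\<Sum>w\<in>words_upto (Suc L). \<rho> ^ length w)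
      = (\<Sum>w\<in>words_upto L. \<rho> ^ length w) + (\<Sum>w\<in>words (Suc L). \<rho> ^ length w)"
    unfolding words_upto_Suc
    by (rule sum.union_disjoint) (use finite_words_upto finite_words words_upto_disjoint_words in auto)
  ultimately show ?case using Suc by simp
qed

lemma sum_nuc_weight_le:
  assumes "finite K"
  shows "(\<Sum>k\<in>K. cmod (nuc_weight k)) \<le> 2"
proof -
  define L where "L = Max (insert 0 (length ` list_decode ` K))"
  define E where "E = list_encode ` words_upto L"
  have "length (list_decode k) \<le> L" if "k \<in> K" for k
    unfolding L_def using assms that by (intro Max_ge) auto
  then have "(\<Sum>k\<in>K. cmod (nuc_weight k)) = (\<Sum>k\<in>K \<inter> E. cmod (nuc_weight k))"
    using nuc_weight_eq_0 unfolding E_def by (intro sum.mono_neutral_right[OF assms]) auto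
  also have "\<dots> \<le> (\<Sum>k\<in>E. cmod (nuc_weight k))"
    unfolding E_def by (intro sum_mono2 finite_imageI finite_words_upto) auto
  also have "\<dots> = (\<Sum>w\<in>words_upto L. \<rho> ^ length w)"
    unfolding E_def using \<rho>(1)
    by (subst sum.reindex[OF inj_list_encode])
       (auto simp: nuc_weight_def words_upto_def norm_power intro!: sum.cong)
  also have "\<dots> \<le> 2" unfolding sum_weights_words_upto by simp
  finally show ?thesis .
qed

lemma summable_nuc_weight: "summable (\<lambda>n. cmod (nuc_weight n))"
  by (rule bounded_imp_summable[where B = 2]) (auto intro: sum_nuc_weight_le)

definition weight_tail :: "nat \<Rightarrow> real" where
  "weight_tail M = (\<Sum>n. cmod (nuc_weight n)) - (\<Sum>n<M. cmod (nuc_weight n))"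

lemma weight_tail_tendsto: "weight_tail \<longlonglongrightarrow> 0"
  using tendsto_diff[OF tendsto_const[of "\<Sum>n. cmod (nuc_weight n)"]
      summable_LIMSEQ[OF summable_nuc_weight]]
  unfolding weight_tail_def[abs_def] by simp

lemma sum_nuc_weight_le_tail:
  assumes "finite D" "D \<inter> {..<M} = {}"
  shows "(\<Sum>n\<in>D. cmod (nuc_weight n)) \<le> weight_tail M"
proof -
  have "(\<Sum>n\<in>D. cmod (nuc_weight n)) + (\<Sum>n<M. cmod (nuc_weight n))
      = (\<Sum>n\<in>D \<union> {..<M}. cmod (nuc_weight n))"
    using assms by (simp add: sum.union_disjoint)
  also have "\<dots> \<le> (\<Sum>n. cmod (nuc_weight n))"
    by (rule sum_le_suminf[OF summable_nuc_weight]) (use assms in auto)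
  finally show ?thesis unfolding weight_tail_def by simp
qed

lemma cyl_approx_minus_partial_sum:
  assumes "\<And>n. n < M \<Longrightarrow> length (list_decode n) \<le> L"
  shows "cyl_approx L \<phi> \<omega> - (\<Sum>n<M. nuc_weight n * nuc_coord n \<phi> * nuc_vec n \<omega>)
       = (\<Sum>n\<in>list_encode ` words_upto L - {..<M}. nuc_weight n * nuc_coord n \<phi> * nuc_vec n \<omega>)"
proof -
  define E where "E = list_encode ` words_upto L"
  define t where "t n = nuc_weight n * nuc_coord n \<phi> * nuc_vec n \<omega>" for n
  have "cyl_approx L \<phi> \<omega> = (\<Sum>w\<in>words_upto L. t (list_encode w))"
    unfolding cyl_approx_def t_def by (rule sum.cong) (auto simp: nuc_term_word words_upto_def)
  also have "\<dots> = (\<Sum>n\<in>E. t n)"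
    unfolding E_def by (simp add: sum.reindex[OF inj_list_encode])
  also have "\<dots> = (\<Sum>n\<in>E \<inter> {..<M}. t n) + (\<Sum>n\<in>E - {..<M}. t n)"
    by (rule sum.Int_Diff) (simp add: E_def finite_words_upto)
  finally have approx: "cyl_approx L \<phi> \<omega> = (\<Sum>n\<in>E \<inter> {..<M}. t n) + (\<Sum>n\<in>E - {..<M}. t n)" .
  have "(\<Sum>n<M. t n) = (\<Sum>n\<in>{..<M} \<inter> E. t n)"
    using nuc_weight_eq_0 assms unfolding t_def E_def by (intro sum.mono_neutral_right) auto
  with approx show ?thesis unfolding t_def E_def by (simp add: Int_commute)
qed

context
  fixes p :: "((nat \<Rightarrow> nat) \<Rightarrow> complex) \<Rightarrow> real" and K :: real
  assumes p: "seminorm_V N A p" and K: "0 \<le> K"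
    and p_le: "\<And>\<phi>. \<phi> \<in> Vspace N A \<Longrightarrow> p \<phi> \<le> K * thetanorm N A \<theta>0 \<phi>"
begin

lemma seminorm_nuc_vec: "p (nuc_vec n) \<le> 2 * K"
  using order_trans[OF p_le[OF nuc_vec_Vspace] mult_left_mono[OF thetanorm_nuc_vec K]]
  by (simp add: mult.commute)

lemma seminorm_nuc_term:
  assumes "\<phi> \<in> Vspace N A"
  shows "p (\<lambda>\<omega>. nuc_weight n * nuc_coord n \<phi> * nuc_vec n \<omega>)
           \<le> cmod (nuc_weight n) * (2 * K * thetanorm N A \<theta>1 \<phi> / \<theta>1)"
proof -
  have lip: "lipschitz_all \<phi>" using assms by (rule Vspace_imp_lipschitz_all)
  have "p (\<lambda>\<omega>. nuc_weight n * nuc_coord n \<phi> * nuc_vec n \<omega>)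
      = cmod (nuc_weight n) * (cmod (nuc_coord n \<phi>) * p (nuc_vec n))"
    using seminorm_V_scale[OF p nuc_vec_Vspace, of "nuc_weight n * nuc_coord n \<phi>" n]
    by (simp add: norm_mult)
  also have "\<dots> \<le> cmod (nuc_weight n) * (thetanorm N A \<theta>1 \<phi> / \<theta>1 * (2 * K))"
    using nuc_coord_bound[OF lip] seminorm_nuc_vec seminorm_V_nonneg[OF p nuc_vec_Vspace]
      thetanorm_nonneg[OF lip \<theta>1(1)] \<theta>1(1)
    by (intro mult_left_mono mult_mono) auto
  finally show ?thesis by (simp add: ac_simps)
qed

lemma partial_sum_error:
  assumes \<phi>: "\<phi> \<in> Vspace N A"
  shows "p (\<lambda>\<omega>. \<phi> \<omega> - (\<Sum>n<M. nuc_weight n * nuc_coord n \<phi> * nuc_vec n \<omega>))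
           \<le> 2 * K * thetanorm N A \<theta>1 \<phi> / \<theta>1 * weight_tail M"
proof -
  define S where "S = (\<lambda>\<omega>. \<Sum>n<M. nuc_weight n * nuc_coord n \<phi> * nuc_vec n \<omega>)"
  define c where "c = 2 * K * thetanorm N A \<theta>1 \<phi> / \<theta>1"
  define \<Lambda> where "\<Lambda> = lipconst N A \<theta>1 \<phi>"
  define L0 where "L0 = Max (insert 0 (length ` list_decode ` {..<M}))"
  have lip: "lipschitz_all \<phi>" using \<phi> by (rule Vspace_imp_lipschitz_all)
  have c: "0 \<le> c" unfolding c_def using K \<theta>1 thetanorm_nonneg[OF lip \<theta>1(1)] by simp
  have SV: "S \<in> Vspace N A" unfolding S_def by (auto intro!: Vspace_sum Vspace_scale nuc_vec_Vspace)
  have bound: "p (\<lambda>\<omega>. \<phi> \<omega> - S \<omega>) \<le> K * (3 * \<Lambda> * \<rho> ^ L) + c * weight_tail M" if "L0 \<le> L" for L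
  proof -
    have len: "length (list_decode n) \<le> L" if "n < M" for n
      using \<open>L0 \<le> L\<close> that unfolding L0_def by (meson Max_ge finite_imageI finite_insert
          finite_lessThan image_eqI insertI2 lessThan_iff order_trans)
    define D where "D = list_encode ` words_upto L - {..<M}"
    have D: "finite D" "D \<inter> {..<M} = {}" unfolding D_def by (auto simp: finite_words_upto)
    have "p (\<lambda>\<omega>. \<phi> \<omega> - cyl_approx L \<phi> \<omega>) \<le> K * thetanorm N A \<theta>0 (\<lambda>\<omega>. \<phi> \<omega> - cyl_approx L \<phi> \<omega>)"
      by (rule p_le[OF Vspace_diff[OF \<phi> cyl_approx_Vspace]])
    also have "\<dots> \<le> K * (3 * \<Lambda> * \<rho> ^ L)"
      using thetanorm_cyl_approx_error[OF lip \<theta>1(1) \<theta>0 \<theta>1(2), of L] K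
      unfolding \<Lambda>_def \<theta>1(3) by (rule mult_left_mono)
    finally have approx: "p (\<lambda>\<omega>. \<phi> \<omega> - cyl_approx L \<phi> \<omega>) \<le> K * (3 * \<Lambda> * \<rho> ^ L)" .
    have "p (\<lambda>\<omega>. cyl_approx L \<phi> \<omega> - S \<omega>)
        = p (\<lambda>\<omega>. \<Sum>n\<in>D. nuc_weight n * nuc_coord n \<phi> * nuc_vec n \<omega>)"
      using cyl_approx_minus_partial_sum[OF len] by (simp add: S_def D_def)
    also have "\<dots> \<le> (\<Sum>n\<in>D. p (\<lambda>\<omega>. nuc_weight n * nuc_coord n \<phi> * nuc_vec n \<omega>))"
      by (rule seminorm_V_sum[OF p D(1)]) (intro Vspace_scale nuc_vec_Vspace)
    also have "\<dots> \<le> (\<Sum>n\<in>D. cmod (nuc_weight n)) * c"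
      unfolding c_def sum_distrib_right by (intro sum_mono seminorm_nuc_term \<phi>)
    also have "\<dots> \<le> weight_tail M * c"
      by (intro mult_right_mono sum_nuc_weight_le_tail D c)
    finally have "p (\<lambda>\<omega>. cyl_approx L \<phi> \<omega> - S \<omega>) \<le> c * weight_tail M" by (simp add: mult.commute)
    moreover have "p (\<lambda>\<omega>. \<phi> \<omega> - S \<omega>)
        \<le> p (\<lambda>\<omega>. \<phi> \<omega> - cyl_approx L \<phi> \<omega>) + p (\<lambda>\<omega>. cyl_approx L \<phi> \<omega> - S \<omega>)"
      by (rule seminorm_V_diff_triangle[OF p \<phi> cyl_approx_Vspace SV])
    ultimately show ?thesis using approx by linarith
  qed
  have "(\<lambda>L. K * (3 * \<Lambda> * \<rho> ^ L) + c * weight_tail M) \<longlonglongrightarrow> K * (3 * \<Lambda> * 0) + c * weight_tail M"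
    using \<rho> by (intro tendsto_intros LIMSEQ_power_zero) auto
  then have "p (\<lambda>\<omega>. \<phi> \<omega> - S \<omega>) \<le> K * (3 * \<Lambda> * 0) + c * weight_tail M"
    by (rule LIMSEQ_le_const) (use bound in blast)
  then show ?thesis unfolding S_def c_def by simp
qed

lemma nuclear_dominating_seminorm:
  "\<exists>q. cont_seminorm_V N A q \<and> (\<forall>\<phi>\<in>Vspace N A. p \<phi> \<le> q \<phi>) \<and> nuclear_natmap N A q p"
proof -
  define q where "q \<phi> = (K + 1) * thetanorm N A \<theta>1 \<phi>" for \<phi>
  have q: "seminorm_V N A q"
    unfolding seminorm_V_def q_def
  proof (intro conjI ballI allI)
    fix \<phi> \<psi> assume "\<phi> \<in> Vspace N A" "\<psi> \<in> Vspace N A"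
    then show "(K + 1) * thetanorm N A \<theta>1 (\<lambda>\<omega>. \<phi> \<omega> + \<psi> \<omega>)
        \<le> (K + 1) * thetanorm N A \<theta>1 \<phi> + (K + 1) * thetanorm N A \<theta>1 \<psi>"
      using mult_left_mono[OF thetanorm_add[OF Vspace_imp_lipschitz_all Vspace_imp_lipschitz_all \<theta>1(1)],
          where c = "K + 1"] K
      by (simp add: distrib_left)
  next
    fix \<phi> c assume "\<phi> \<in> Vspace N A"
    then show "(K + 1) * thetanorm N A \<theta>1 (\<lambda>\<omega>. c * \<phi> \<omega>) = cmod c * ((K + 1) * thetanorm N A \<theta>1 \<phi>)"
      using thetanorm_scale[OF Vspace_imp_lipschitz_all \<theta>1(1)] by simp
  qed
  have "cont_seminorm_V N A q"
    unfolding cont_seminorm_V_def using q \<theta>1(1)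
    by (intro conjI exI[of _ "{\<theta>1}"] exI[of _ "K + 1"]) (auto simp: q_def)
  moreover have p_le_q: "p \<phi> \<le> q \<phi>" if "\<phi> \<in> Vspace N A" for \<phi>
  proof -
    have lip: "lipschitz_all \<phi>" using that by (rule Vspace_imp_lipschitz_all)
    have "p \<phi> \<le> K * thetanorm N A \<theta>0 \<phi>" by (rule p_le[OF that])
    also have "\<dots> \<le> K * thetanorm N A \<theta>1 \<phi>"
      using thetanorm_antimono[OF lip \<theta>1(1) \<theta>0 \<theta>1(2)] K by (rule mult_left_mono)
    also have "\<dots> \<le> q \<phi>" unfolding q_def using thetanorm_nonneg[OF lip \<theta>1(1)] by (simp add: distrib_right)
    finally show ?thesis .
  qed
  moreover have "nuclear_natmap N A q p"
  proof -
    have coord_add: "\<And>i \<phi> \<psi>. \<phi> \<in> Vspace N A \<Longrightarrow> \<psi> \<in> Vspace N A \<Longrightarrow>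
        nuc_coord i (\<lambda>\<omega>. \<phi> \<omega> + \<psi> \<omega>) = nuc_coord i \<phi> + nuc_coord i \<psi>"
      by (rule nuc_coord_add)
    have coord_scale: "\<And>i c \<phi>. \<phi> \<in> Vspace N A \<Longrightarrow> nuc_coord i (\<lambda>\<omega>. c * \<phi> \<omega>) = c * nuc_coord i \<phi>"
      by (rule nuc_coord_scale)
    have q_eq: "thetanorm N A \<theta>1 \<phi> / \<theta>1 = 1 / (\<theta>1 * (K + 1)) * q \<phi>"
      and q_eq': "2 * K * thetanorm N A \<theta>1 \<phi> / \<theta>1 = 2 * K / (\<theta>1 * (K + 1)) * q \<phi>" for \<phi>
      unfolding q_def using K \<theta>1(1) by simp_all
    have coord_bound: "cmod (nuc_coord i \<phi>) \<le> 1 / (\<theta>1 * (K + 1)) * q \<phi>"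
      if "\<phi> \<in> Vspace N A" for i \<phi>
      using nuc_coord_bound[OF Vspace_imp_lipschitz_all[OF that]] unfolding q_eq .
    have approx: "p (\<lambda>\<omega>. \<phi> \<omega> - (\<Sum>n<M. nuc_weight n * nuc_coord n \<phi> * nuc_vec n \<omega>))
        \<le> 2 * K / (\<theta>1 * (K + 1)) * q \<phi> * weight_tail M" if "\<phi> \<in> Vspace N A" for M \<phi>
      using partial_sum_error[OF that, of M] unfolding q_eq' .
    show ?thesis
      by (rule nuclear_natmapI[where lam = nuc_weight and f = nuc_coord and y = nuc_vec,
            OF p q p_le_q coord_add coord_scale coord_bound nuc_vec_Vspace
            approx weight_tail_tendsto summable_nuc_weight seminorm_nuc_vec])
  qed
  ultimately show ?thesis by blast
qed

end

end

theorem theoremB1: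
  fixes N :: nat and A :: "nat \<Rightarrow> nat \<Rightarrow> nat"
  assumes "N \<ge> 2" and "aperiodic01 N A"
  shows "nuclear_V N A"
proof -
  interpret subshift N A .
  show ?thesis
    unfolding nuclear_V_def
  proof (intro conjI ballI impI allI)
    fix \<phi> assume \<phi>: "\<phi> \<in> Vspace N A" and "\<exists>\<omega>. \<phi> \<omega> \<noteq> 0"
    then obtain \<omega> where "\<phi> \<omega> \<noteq> 0" by blast
    moreover from \<phi> this have "\<omega> \<in> SigmaA N A" unfolding Vspace_def by blast
    ultimately have "0 < thetanorm N A (1/2) \<phi>"
      using thetanorm_pos[OF Vspace_imp_lipschitz_all[OF \<phi>]] by simp
    then show "\<exists>\<theta>\<in>{0<..<1}. 0 < thetanorm N A \<theta> \<phi>" by (intro bexI[of _ "1/2"]) auto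
  next
    fix p assume p: "cont_seminorm_V N A p"
    then have seminorm: "seminorm_V N A p" unfolding cont_seminorm_V_def by blast
    obtain \<theta>0 K where \<theta>0: "\<theta>0 \<in> {0<..<1}" and K: "0 \<le> K"
      and p_le: "\<And>\<phi>. \<phi> \<in> Vspace N A \<Longrightarrow> p \<phi> \<le> K * thetanorm N A \<theta>0 \<phi>"
      using cont_seminorm_V_single_norm[OF p] by blast
    interpret nuclear_expansion N A \<theta>0
      using \<theta>0 assms(1) by unfold_locales auto
    show "\<exists>q. cont_seminorm_V N A q \<and> (\<forall>\<phi>\<in>Vspace N A. p \<phi> \<le> q \<phi>) \<and> nuclear_natmap N A q p"
      by (rule nuclear_dominating_seminorm[OF seminorm K p_le])
  qed
qed

end
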